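(* Let $p,q\in\mathbb{R}$ with $p\neq0$, $q\neq0$, and let $j\in\mathbb{R}$ with $j\neq n$. If $M,N\in\mathcal{K}_o^n$ and $Q\in\mathcal{S}_o^n$, then $$\lim_{t\rightarrow0}\frac{\widetilde{W}_{q,j}(M+_pt\cdot N,Q)-\widetilde{W}_{q,j}(M,Q)}{t}=\frac{q}{p}\int_{S^{n-1}}h_N^p(v)\,d\widetilde{\mathcal{C}}_{p,q,j}(M,Q,v).$$
   Context: $\mathcal{K}_o^n$ denotes the set of convex bodies (compact convex sets with nonempty interior) in $\mathbb{R}^n$ containing the origin in their interiors; $\mathcal{S}_o^n$ denotes the set of compact sets star-shaped about the origin whose radial function $\rho_Q(x)=\max\{\lambda\ge0:\lambda x\in Q\}$ is positive and continuous on $\mathbb{R}^n\setminus\{0\}$. $h_M(x)=\max\{x\cdot y:y\in M\}$ is the support function, and $du$ is spherical Lebesgue measure on $S^{n-1}$. For $q\in\mathbb{R}$, $j\ne n$, $M\in\mathcal{K}_o^n$, $Q\in\mathcal{S}_o^n$, the $q$-th dual mixed quermassintegral is $\widetilde{W}_{q,j}(M,Q)=\frac1n\int_{S^{n-1}}\rho_M^q(u)\rho_Q^{n-q-j}(u)\,du$. For $M\in\mathcal{K}_o^n$, let $\partial'M$ be the set of boundary points of $M$ with a unique outer unit normal $\nu_M(x)$; the radial Gauss map $\alpha_M(u)=\nu_M(\rho_M(u)u)$ is defined for almost all $u\in S^{n-1}$. For a Borel set $\eta\subseteq S^{n-1}$ the reverse radial Gauss image is $R^*_M(\eta)=\{u\in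 S^{n-1}:\rho_M(u)u\cdot v=h_M(v)\text{ for some }v\in\eta\}$. The $q$-th dual mixed curvature measure is $\widetilde{\mathcal{C}}_{q,j}(M,Q,\eta)=\frac1n\int_{R^*_M(\eta)}\rho_M^q(u)\rho_Q^{n-q-j}(u)\,du$, and for $p\in\mathbb{R}$ the $(p,q)$-dual mixed curvature measure $\widetilde{\mathcal{C}}_{p,q,j}(M,Q,\cdot)$ is the measure with $d\widetilde{\mathcal{C}}_{p,q,j}(M,Q,\cdot)=h_M^{-p}\,d\widetilde{\mathcal{C}}_{q,j}(M,Q,\cdot)$. For $p\ne0$ and $t$ such that $h_M^p+t h_N^p>0$ on $S^{n-1}$, $M+_pt\cdot N$ is the Wulff shape $\{x\in\mathbb{R}^n: x\cdot v\le (h_M^p(v)+th_N^p(v))^{1/p}\ \forall v\in S^{n-1}\}$. *)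

theory Defs
  imports "HOL-Analysis.Analysis"
begin

definition support_fun :: "'a::euclidean_space set \<Rightarrow> 'a \<Rightarrow> real" where
  "support_fun M x = Sup {x \<bullet> y | y. y \<in> M}"

definition radial_fun :: "'a::euclidean_space set \<Rightarrow> 'a \<Rightarrow> real" where
  "radial_fun Q x = Sup {l. l \<ge> 0 \<and> l *\<^sub>R x \<in> Q}"

definition convex_body_o :: "'a::euclidean_space set \<Rightarrow> bool" where
  "convex_body_o M \<longleftrightarrow> compact M \<and> convex M \<and> interior M \<noteq> {} \<and> 0 \<in> interior M"

definition star_body_o :: "'a::euclidean_space set \<Rightarrow> bool" where
  "star_body_o Q \<longleftrightarrow> compact Q \<and> (\<forall>x\<in>Q. \<forall>t\<in>{0..1}. t *\<^sub>R x \<in> Q)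
     \<and> (\<forall>x. x \<noteq> 0 \<longrightarrow> radial_fun Q x > 0)
     \<and> continuous_on (UNIV - {0}) (radial_fun Q)"

text \<open>Spherical Lebesgue measure on S^{n-1}: sigma(E) = n * vol({r u : 0 < r <= 1, u in E}),
  realised as the push-forward of n times Lebesgue measure on the punctured unit ball
  under radial projection.\<close>
definition sphere_measure :: "'a::euclidean_space measure" where
  "sphere_measure = distr (scale_measure (ennreal (real DIM('a)))
       (restrict_space lborel (ball 0 1 - {0})))
     (restrict_space borel (sphere 0 1)) (\<lambda>x. x /\<^sub>R norm x)"

definition dual_mixed_quermass :: "real \<Rightarrow> real \<Rightarrow> 'a::euclidean_space set \<Rightarrow> 'a set \<Rightarrow> real" where
  "dual_mixed_quermass q j M Q =
     (1 / real DIM('a)) * (\<integral>u. radial_fun M u powr q * radial_fun Q u powr (real DIM('a) - q - j)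
        \<partial>(sphere_measure :: 'a measure))"

definition reverse_radial_gauss :: "'a::euclidean_space set \<Rightarrow> 'a set \<Rightarrow> 'a set" where
  "reverse_radial_gauss M \<eta> =
     {u \<in> sphere 0 1. \<exists>v\<in>\<eta>. (radial_fun M u *\<^sub>R u) \<bullet> v = support_fun M v}"

definition dual_mixed_curv :: "real \<Rightarrow> real \<Rightarrow> 'a::euclidean_space set \<Rightarrow> 'a set \<Rightarrow> 'a measure" where
  "dual_mixed_curv q j M Q =
     measure_of (sphere 0 1) (sets (restrict_space borel (sphere 0 (1::real))))
       (\<lambda>\<eta>. \<integral>\<^sup>+ u. indicator (reverse_radial_gauss M \<eta>) u *
           ennreal ((1 / real DIM('a)) * (radial_fun M u powr q * radial_fun Q u powr (real DIM('a) - q - j)))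
         \<partial>(sphere_measure :: 'a measure))"

definition pq_dual_mixed_curv :: "real \<Rightarrow> real \<Rightarrow> real \<Rightarrow> 'a::euclidean_space set \<Rightarrow> 'a set \<Rightarrow> 'a measure" where
  "pq_dual_mixed_curv p q j M Q =
     density (dual_mixed_curv q j M Q) (\<lambda>v. ennreal (support_fun M v powr (- p)))"

definition Lp_comb :: "real \<Rightarrow> 'a::euclidean_space set \<Rightarrow> real \<Rightarrow> 'a set \<Rightarrow> 'a set" where
  "Lp_comb p M t N = {x. \<forall>v\<in>sphere 0 1.
      x \<bullet> v \<le> (support_fun M v powr p + t * support_fun N v powr p) powr (1 / p)}"

end

theory Submission
  imports Defs
begin

(* For v on the sphere, the Wulff function of M +_p t.N is h_M exp (- L t) with
   L t = - ln (1 + t (h_N / h_M)^p) / p = - t (h_N / h_M)^p / p + O(t^2), and the radial function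
   of a Wulff shape is the reciprocal of its gauge u |-> max_v u.v / f(v).  Hence
   1 / rho_{M +_p t.N}(u) is the maximum over v of (u.v / h_M(v)) exp (L t v).  Where this maximum
   is attained at a single v, namely the normal alpha_M(u), Danskin's theorem differentiates it
   at t = 0 and gives d/dt rho^q = (q/p) (h_N / h_M)^p (alpha_M(u)) rho_M(u)^q.  The other
   directions form a null set: on the cone over them the gauge of M has two distinct linear
   minorants touching it, so it has a slope jump along a coordinate direction, and each line
   meets the set of such jumps at most once.  Dominated convergence gives the limit, and the
   image of rho_M^q rho_Q^(n-q-j) du / n under alpha_M is the dual curvature measure. *)

lemma Sup_image_attained:
  fixes g :: "'a::topological_space \<Rightarrow> real"
  assumes "compact S" "S \<noteq> {}" "continuous_on S g"
  obtains v where "v \<in> S" "Sup (g ` S) = g v" "\<And>w. w \<in> S \<Longrightarrow> g w \<le> g v"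
proof -
  obtain v where v: "v \<in> S" "\<And>w. w \<in> S \<Longrightarrow> g w \<le> g v"
    using continuous_attains_sup[OF assms] by blast
  moreover have "Sup (g ` S) = g v"
    by (rule cSup_eq_maximum) (use v in auto)
  ultimately show thesis using that by blast
qed

lemma Sup_image_upper:
  fixes g :: "'a::topological_space \<Rightarrow> real"
  assumes "compact S" "continuous_on S g" "w \<in> S"
  shows "g w \<le> Sup (g ` S)"
  using assms by (meson bounded_imp_bdd_above cSup_upper compact_continuous_image
      compact_imp_bounded imageI)

lemma abs_ln_one_plus_le:
  fixes x :: real
  assumes "\<bar>x\<bar> \<le> 1 / 2"
  shows "\<bar>ln (1 + x)\<bar> \<le> 2 * \<bar>x\<bar>"
proof -
  have "2 * x\<^sup>2 \<le> \<bar>x\<bar>"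
    using mult_right_mono[OF assms abs_ge_zero[of x]] by (simp add: power2_eq_square)
  then show ?thesis
    using abs_ln_one_plus_x_minus_x_bound[OF assms] by linarith
qed

lemma abs_exp_minus_one_le:
  fixes x :: real
  shows "\<bar>exp x - 1\<bar> \<le> \<bar>x\<bar> * exp \<bar>x\<bar>"
proof (cases "0 \<le> x")
  case True
  have "(1 - x) * exp x \<le> exp (- x) * exp x"
    using exp_ge_add_one_self[of "- x"] by (intro mult_right_mono) auto
  then show ?thesis
    using True by (simp add: exp_minus field_simps)
next
  case False
  have "\<bar>exp x - 1\<bar> = 1 - exp x"
    using False by simp
  also have "\<dots> \<le> - x"
    using exp_ge_add_one_self[of x] by linarith
  also have "\<dots> \<le> - x * exp (- x)"
    using False by (simp add: mult_le_cancel_left1)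
  finally show ?thesis
    using False by simp
qed

lemma integral_dominated_convergence_at:
  fixes s :: "'b::first_countable_topology \<Rightarrow> 'a \<Rightarrow> 'c::{banach, second_countable_topology}"
  assumes f: "f \<in> borel_measurable M" and w: "integrable M w"
    and bound: "\<forall>\<^sub>F t in at x within T. s t \<in> borel_measurable M \<and> (AE y in M. norm (s t y) \<le> w y)"
    and lim: "AE y in M. ((\<lambda>t. s t y) \<longlongrightarrow> f y) (at x within T)"
  shows "((\<lambda>t. integral\<^sup>L M (s t)) \<longlongrightarrow> integral\<^sup>L M f) (at x within T)"
proof (subst tendsto_at_iff_sequentially, intro allI impI)
  fix X :: "nat \<Rightarrow> 'b"
  assume "\<forall>i. X i \<in> T - {x}" "X \<longlonglongrightarrow> x"
  then have X: "filterlim X (at x within T) sequentially"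
    by (auto simp: filterlim_at)
  obtain N where N: "\<And>n. N \<le> n \<Longrightarrow> s (X n) \<in> borel_measurable M \<and> (AE y in M. norm (s (X n) y) \<le> w y)"
    using filterlim_iff[THEN iffD1, OF X, rule_format, OF bound]
    by (auto simp: eventually_sequentially)
  have "(\<lambda>n. integral\<^sup>L M (s (X (n + N)))) \<longlonglongrightarrow> integral\<^sup>L M f"
  proof (rule integral_dominated_convergence[OF f _ w])
    show "AE y in M. (\<lambda>n. s (X (n + N)) y) \<longlonglongrightarrow> f y"
      using lim by eventually_elim (rule LIMSEQ_ignore_initial_segment, rule filterlim_compose[OF _ X])
  qed (use N in simp_all)
  then show "((\<lambda>t. integral\<^sup>L M (s t)) \<circ> X) \<longlonglongrightarrow> integral\<^sup>L M f"
    unfolding comp_def by (rule LIMSEQ_offset)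
qed

lemma abs_divide_sub_le_between:
  fixes A D C t c :: real
  assumes "A \<le> D" "D \<le> C"
  shows "\<bar>D / t - c\<bar> \<le> \<bar>A / t - c\<bar> + \<bar>C / t - c\<bar>"
proof (cases "0 \<le> t")
  case True
  then have "A / t \<le> D / t" "D / t \<le> C / t"
    using assms by (auto intro: divide_right_mono)
  then show ?thesis
    by linarith
next
  case False
  then have "D / t \<le> A / t" "C / t \<le> D / t"
    using assms by (auto intro: divide_right_mono_neg)
  then show ?thesis
    by linarith
qed

lemma tendsto_divide_between:
  fixes f l u :: "real \<Rightarrow> real"
  assumes between: "\<forall>\<^sub>F t in F. l t \<le> f t \<and> f t \<le> u t"
    and l: "((\<lambda>t. l t / t) \<longlongrightarrow> c) F" and u: "((\<lambda>t. u t / t) \<longlongrightarrow> c) F"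
  shows "((\<lambda>t. f t / t) \<longlongrightarrow> c) F"
proof (rule LIM_zero_cancel, rule Lim_null_comparison)
  show "\<forall>\<^sub>F t in F. norm (f t / t - c) \<le> \<bar>l t / t - c\<bar> + \<bar>u t / t - c\<bar>"
    using between by eventually_elim (simp add: abs_divide_sub_le_between)
  show "((\<lambda>t. \<bar>l t / t - c\<bar> + \<bar>u t / t - c\<bar>) \<longlongrightarrow> 0) F"
    using tendsto_add[OF tendsto_rabs_zero[OF LIM_zero[OF l]] tendsto_rabs_zero[OF LIM_zero[OF u]]]
    by simp
qed

lemma tendsto_divide_if_quadratic_error:
  fixes g c :: "real \<Rightarrow> real"
  assumes error: "\<forall>\<^sub>F t in at 0. \<bar>g t - t * c t\<bar> \<le> B * t\<^sup>2" and c: "(c \<longlongrightarrow> c0) (at 0)"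
  shows "((\<lambda>t. g t / t) \<longlongrightarrow> c0) (at 0)"
proof (rule LIM_zero_cancel, rule Lim_null_comparison)
  show "\<forall>\<^sub>F t in at 0. norm (g t / t - c0) \<le> B * \<bar>t\<bar> + \<bar>c t - c0\<bar>"
    using error eventually_neq_at_within[of 0 0 UNIV]
  proof eventually_elim
    case (elim t)
    have "\<bar>g t / t - c t\<bar> = \<bar>g t - t * c t\<bar> / \<bar>t\<bar>"
      using elim(2) by (simp add: field_simps flip: abs_divide)
    also have "\<dots> \<le> B * t\<^sup>2 / \<bar>t\<bar>"
      using elim(1) by (simp add: divide_right_mono)
    also have "\<dots> = B * \<bar>t\<bar>"
      using elim(2) by (simp add: power2_eq_square divide_simps)
    finally show ?case
      using abs_triangle_ineq[of "g t / t - c t" "c t - c0"] by simp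
  qed
  have "((\<lambda>t. B * \<bar>t\<bar> + \<bar>c t - c0\<bar>) \<longlongrightarrow> B * \<bar>0\<bar> + \<bar>c0 - c0\<bar>) (at 0)"
    by (intro tendsto_intros c)
  then show "((\<lambda>t. B * \<bar>t\<bar> + \<bar>c t - c0\<bar>) \<longlongrightarrow> 0) (at 0)"
    by simp
qed

section \<open>Wulff shapes and their gauges\<close>

definition wulff_shape :: "('a::euclidean_space \<Rightarrow> real) \<Rightarrow> 'a set" where
  "wulff_shape f = {x. \<forall>v\<in>sphere 0 1. x \<bullet> v \<le> f v}"

definition wulff_gauge :: "('a::euclidean_space \<Rightarrow> real) \<Rightarrow> 'a \<Rightarrow> real" where
  "wulff_gauge f x = Sup ((\<lambda>v. x \<bullet> v / f v) ` sphere 0 1)"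

context
  fixes f :: "'a::euclidean_space \<Rightarrow> real"
  assumes f_cont: "continuous_on (sphere 0 1) f"
    and f_pos: "\<And>v. v \<in> sphere 0 1 \<Longrightarrow> 0 < f v"
begin

lemma continuous_on_inner_divide:
  "continuous_on (sphere 0 1) (\<lambda>v. x \<bullet> v / f v)"
  using f_pos by (intro continuous_intros f_cont) (metis less_irrefl)

lemma wulff_gauge_attained:
  obtains v where "v \<in> sphere 0 1" "wulff_gauge f x = x \<bullet> v / f v"
proof -
  have "sphere (0::'a) 1 \<noteq> {}"
    by simp
  then show thesis
    using Sup_image_attained[OF compact_sphere _ continuous_on_inner_divide] that
    unfolding wulff_gauge_def by blast
qed

lemma wulff_gauge_upper: "v \<in> sphere 0 1 \<Longrightarrow> x \<bullet> v / f v \<le> wulff_gauge f x"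
  unfolding wulff_gauge_def by (rule Sup_image_upper[OF compact_sphere continuous_on_inner_divide])

lemma wulff_gauge_pos:
  assumes "u \<in> sphere 0 1"
  shows "0 < wulff_gauge f u"
proof -
  have "0 < u \<bullet> u / f u"
    using assms f_pos[OF assms] by (simp add: dot_square_norm)
  also have "\<dots> \<le> wulff_gauge f u"
    using wulff_gauge_upper[OF assms] .
  finally show ?thesis .
qed

lemma wulff_gauge_scaleR:
  assumes "0 \<le> l"
  shows "wulff_gauge f (l *\<^sub>R x) = l * wulff_gauge f x"
proof (rule antisym)
  obtain v where v: "v \<in> sphere 0 1" "wulff_gauge f (l *\<^sub>R x) = (l *\<^sub>R x) \<bullet> v / f v"
    using wulff_gauge_attained by blast
  have "(l *\<^sub>R x) \<bullet> v / f v = l * (x \<bullet> v / f v)"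
    by simp
  also have "\<dots> \<le> l * wulff_gauge f x"
    using wulff_gauge_upper[OF v(1)] assms by (rule mult_left_mono)
  finally show "wulff_gauge f (l *\<^sub>R x) \<le> l * wulff_gauge f x"
    using v(2) by simp
next
  obtain w where w: "w \<in> sphere 0 1" "wulff_gauge f x = x \<bullet> w / f w"
    using wulff_gauge_attained by blast
  have "l * wulff_gauge f x = (l *\<^sub>R x) \<bullet> w / f w"
    using w(2) by simp
  also have "\<dots> \<le> wulff_gauge f (l *\<^sub>R x)"
    using wulff_gauge_upper[OF w(1)] .
  finally show "l * wulff_gauge f x \<le> wulff_gauge f (l *\<^sub>R x)" .
qed

lemma radial_fun_wulff_shape:
  assumes u: "u \<in> sphere 0 1"
  shows "radial_fun (wulff_shape f) u = 1 / wulff_gauge f u"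
proof -
  define G where "G = wulff_gauge f u"
  have G: "0 < G"
    unfolding G_def using wulff_gauge_pos[OF u] .
  obtain w where w: "w \<in> sphere 0 1" "G = u \<bullet> w / f w"
    unfolding G_def using wulff_gauge_attained by blast
  have "l *\<^sub>R u \<in> wulff_shape f \<longleftrightarrow> l * G \<le> 1" if "0 \<le> l" for l
  proof
    assume "l *\<^sub>R u \<in> wulff_shape f"
    then have "l * (u \<bullet> w) \<le> f w"
      using w(1) by (auto simp: wulff_shape_def)
    moreover have "l * G * f w = l * (u \<bullet> w)"
      using w(2) f_pos[OF w(1)] by simp
    ultimately show "l * G \<le> 1"
      using f_pos[OF w(1)] by (metis mult_1 mult_le_cancel_right_pos)
  next
    assume lG: "l * G \<le> 1"
    have "l * (u \<bullet> v) \<le> f v" if v: "v \<in> sphere 0 1" for v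
    proof -
      have "l * (u \<bullet> v) = (l * (u \<bullet> v / f v)) * f v"
        using f_pos[OF v] by simp
      also have "\<dots> \<le> (l * G) * f v"
        using wulff_gauge_upper[OF v] \<open>0 \<le> l\<close> f_pos[OF v] unfolding G_def
        by (intro mult_right_mono mult_left_mono) auto
      also have "\<dots> \<le> f v"
        using lG f_pos[OF v] by (simp add: mult_left_le_one_le)
      finally show ?thesis .
    qed
    then show "l *\<^sub>R u \<in> wulff_shape f"
      by (simp add: wulff_shape_def)
  qed
  then have "{l. 0 \<le> l \<and> l *\<^sub>R u \<in> wulff_shape f} = {0..1 / G}"
    using pos_le_divide_eq[OF G] by auto
  then have "radial_fun (wulff_shape f) u = Sup {0..1 / G}"
    unfolding radial_fun_def by simp
  also have "\<dots> = 1 / G"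
    using G by simp
  finally show ?thesis
    unfolding G_def .
qed

text \<open>The gauge is Lipschitz with constant \<open>1 / min f\<close>.\<close>
lemma continuous_on_wulff_gauge: "continuous_on A (wulff_gauge f)"
proof -
  obtain v0 where v0: "v0 \<in> sphere 0 1" "\<And>v. v \<in> sphere 0 1 \<Longrightarrow> f v0 \<le> f v"
    using continuous_attains_inf[OF compact_sphere _ f_cont] by (metis sphere_eq_empty not_one_less_zero)
  define r where "r = f v0"
  have r: "0 < r"
    unfolding r_def using f_pos[OF v0(1)] .
  have one_sided: "wulff_gauge f x \<le> wulff_gauge f y + norm (x - y) / r" for x y
  proof -
    obtain v where v: "v \<in> sphere 0 1" "wulff_gauge f x = x \<bullet> v / f v"
      using wulff_gauge_attained by blast
    have "(x - y) \<bullet> v \<le> norm (x - y)"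
      using norm_cauchy_schwarz[of "x - y" v] v(1) by simp
    then have "(x - y) \<bullet> v / f v \<le> norm (x - y) / r"
      using f_pos[OF v(1)] v0(2)[OF v(1)] r unfolding r_def
      by (meson divide_right_mono frac_le norm_ge_zero order_trans less_imp_le)
    moreover have "y \<bullet> v / f v \<le> wulff_gauge f y"
      using wulff_gauge_upper[OF v(1)] .
    ultimately show ?thesis
      using v(2) by (simp add: inner_diff_left diff_divide_distrib)
  qed
  have "\<bar>wulff_gauge f x - wulff_gauge f y\<bar> \<le> 1 / r * norm (x - y)" for x y
    using one_sided[of x y] one_sided[of y x] by (simp add: norm_minus_commute abs_le_iff)
  then have "(1 / r)-lipschitz_on A (wulff_gauge f)"
    using r by (intro lipschitz_onI) (simp_all add: dist_norm dist_real_def)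
  then show ?thesis
    by (rule lipschitz_on_continuous_on)
qed

end

section \<open>Support functions of convex bodies\<close>

context
  fixes M :: "'a::euclidean_space set"
  assumes M_compact: "compact M" and M_nonempty: "M \<noteq> {}"
begin

lemma support_fun_attained:
  obtains y where "y \<in> M" "support_fun M x = x \<bullet> y"
proof -
  have "continuous_on M (\<lambda>y. x \<bullet> y)"
    by (intro continuous_intros)
  moreover have "{x \<bullet> y | y. y \<in> M} = (\<lambda>y. x \<bullet> y) ` M"
    by auto
  ultimately show thesis
    using Sup_image_attained[OF M_compact M_nonempty] that unfolding support_fun_def by metis
qed

lemma inner_le_support_fun: "y \<in> M \<Longrightarrow> x \<bullet> y \<le> support_fun M x"
proof -
  assume "y \<in> M"
  moreover have "continuous_on M (\<lambda>y. x \<bullet> y)"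
    by (intro continuous_intros)
  moreover have "{x \<bullet> y | y. y \<in> M} = (\<lambda>y. x \<bullet> y) ` M"
    by auto
  ultimately show ?thesis
    using Sup_image_upper[OF M_compact] unfolding support_fun_def by metis
qed

lemma continuous_on_support_fun: "continuous_on A (support_fun M)"
proof -
  obtain R where R: "\<And>y. y \<in> M \<Longrightarrow> norm y \<le> R"
    using compact_imp_bounded[OF M_compact] unfolding bounded_iff by blast
  have R_nonneg: "0 \<le> R"
    using M_nonempty R norm_ge_zero order_trans by blast
  have one_sided: "support_fun M x \<le> support_fun M y + R * norm (x - y)" for x y
  proof -
    obtain z where z: "z \<in> M" "support_fun M x = x \<bullet> z"
      using support_fun_attained by blast
    have "(x - y) \<bullet> z \<le> norm (x - y) * norm z"
      by (rule norm_cauchy_schwarz)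
    also have "\<dots> \<le> R * norm (x - y)"
      using mult_right_mono[OF R[OF z(1)] norm_ge_zero[of "x - y"]] by (simp add: mult.commute)
    finally have "(x - y) \<bullet> z \<le> R * norm (x - y)" .
    then show ?thesis
      using inner_le_support_fun[OF z(1), of y] z(2) by (simp add: inner_diff_left)
  qed
  have "\<bar>support_fun M x - support_fun M y\<bar> \<le> R * norm (x - y)" for x y
    using one_sided[of x y] one_sided[of y x] by (simp add: norm_minus_commute abs_le_iff)
  then have "R-lipschitz_on A (support_fun M)"
    using R_nonneg by (intro lipschitz_onI) (simp_all add: dist_norm dist_real_def)
  then show ?thesis
    by (rule lipschitz_on_continuous_on)
qed

lemma wulff_shape_support_fun:
  assumes "convex M"
  shows "wulff_shape (support_fun M) = M"
proof (intro set_eqI iffI)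
  fix x assume x: "x \<in> wulff_shape (support_fun M)"
  show "x \<in> M"
  proof (rule ccontr)
    assume "x \<notin> M"
    then obtain a b where ab: "a \<bullet> x < b" "\<And>y. y \<in> M \<Longrightarrow> b < a \<bullet> y"
      using separating_hyperplane_closed_point[OF assms compact_imp_closed[OF M_compact]] by blast
    have "a \<noteq> 0"
    proof
      assume "a = 0"
      then show False
        using ab M_nonempty by (metis all_not_in_conv inner_zero_left less_asym)
    qed
    define v where "v = - (1 / norm a) *\<^sub>R a"
    have v: "v \<in> sphere 0 1"
      using \<open>a \<noteq> 0\<close> by (simp add: v_def)
    obtain y where y: "y \<in> M" "support_fun M v = v \<bullet> y"
      using support_fun_attained by blast
    have "v \<bullet> y = - (a \<bullet> y) / norm a"
      by (simp add: v_def)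
    also have "\<dots> < - (a \<bullet> x) / norm a"
      using ab(1) ab(2)[OF y(1)] \<open>a \<noteq> 0\<close> by (simp add: divide_strict_right_mono)
    also have "\<dots> = x \<bullet> v"
      by (simp add: v_def inner_commute)
    finally have "support_fun M v < x \<bullet> v"
      using y(2) by simp
    moreover have "x \<bullet> v \<le> support_fun M v"
      using x v unfolding wulff_shape_def by blast
    ultimately show False
      by linarith
  qed
next
  fix x assume "x \<in> M"
  then have "x \<bullet> v \<le> support_fun M v" for v
    using inner_le_support_fun[of x v] by (simp add: inner_commute)
  then show "x \<in> wulff_shape (support_fun M)"
    by (simp add: wulff_shape_def)
qed

end

lemma support_fun_pos:
  fixes M :: "'a::euclidean_space set"
  assumes "compact M" "0 \<in> interior M" "v \<noteq> 0"
  shows "0 < support_fun M v"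
proof -
  obtain e where e: "0 < e" "ball 0 e \<subseteq> M"
    using assms(2) mem_interior by blast
  define y where "y = (e / (2 * norm v)) *\<^sub>R v"
  have "y \<in> M"
    using e assms(3) by (intro subsetD[OF e(2)]) (simp add: y_def)
  moreover have "0 < v \<bullet> y"
    using e assms(3) by (simp add: y_def dot_square_norm)
  moreover have "v \<bullet> y \<le> support_fun M v"
    using inner_le_support_fun[OF assms(1) _ \<open>y \<in> M\<close>] \<open>y \<in> M\<close> by blast
  ultimately show ?thesis
    by linarith
qed

context
  fixes M :: "'a::euclidean_space set"
  assumes M: "convex_body_o M"
begin

lemma convex_body_o_nonempty: "M \<noteq> {}"
  using M interior_subset by (auto simp: convex_body_o_def)

lemma convex_body_o_support_fun_continuous: "continuous_on A (support_fun M)"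
  by (rule continuous_on_support_fun) (use M convex_body_o_nonempty in \<open>auto simp: convex_body_o_def\<close>)

lemma convex_body_o_support_fun_pos: "v \<in> sphere 0 1 \<Longrightarrow> 0 < support_fun M v"
  by (rule support_fun_pos) (use M in \<open>auto simp: convex_body_o_def\<close>)

lemma radial_fun_convex_body_o:
  "u \<in> sphere 0 1 \<Longrightarrow> radial_fun M u = 1 / wulff_gauge (support_fun M) u"
  using M convex_body_o_nonempty wulff_shape_support_fun[of M]
    radial_fun_wulff_shape[OF convex_body_o_support_fun_continuous convex_body_o_support_fun_pos]
  by (simp add: convex_body_o_def)

end

section \<open>Perturbing the maximum of a function\<close>

lemma Sup_mult_exp_maximizer_bounds:
  fixes a L :: "'a::topological_space \<Rightarrow> real"
  assumes S: "compact S" and a: "continuous_on S a" and L: "continuous_on S L"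
    and v0: "v0 \<in> S" "0 < a v0" "\<And>v. v \<in> S \<Longrightarrow> a v \<le> a v0"
    and x: "x \<in> S" "Sup ((\<lambda>v. a v * exp (L v)) ` S) = a x * exp (L x)"
  shows "L v0 \<le> ln (Sup ((\<lambda>v. a v * exp (L v)) ` S)) - ln (a v0)"
    and "ln (Sup ((\<lambda>v. a v * exp (L v)) ` S)) - ln (a v0) \<le> L x"
    and "a v0 * exp (L v0 - L x) \<le> a x"
proof -
  define \<Phi> where "\<Phi> = Sup ((\<lambda>v. a v * exp (L v)) ` S)"
  have lower: "a v0 * exp (L v0) \<le> \<Phi>"
    unfolding \<Phi>_def using a L v0(1) by (intro Sup_image_upper[OF S]) (auto intro!: continuous_intros)
  have upper: "\<Phi> \<le> a v0 * exp (L x)"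
    using x v0(3)[OF x(1)] by (simp add: \<Phi>_def mult_right_mono)
  have "0 < a v0 * exp (L v0)"
    using v0(2) by simp
  then have "ln (a v0 * exp (L v0)) \<le> ln \<Phi>" "ln \<Phi> \<le> ln (a v0 * exp (L x))"
    using lower upper by (auto intro!: ln_mono)
  then show "L v0 \<le> ln \<Phi> - ln (a v0)" "ln \<Phi> - ln (a v0) \<le> L x"
    using v0(2) by (simp_all add: ln_mult)
  show "a v0 * exp (L v0 - L x) \<le> a x"
    using lower x(2) by (simp add: \<Phi>_def exp_diff pos_divide_le_eq)
qed

lemma ln_Sup_exp_perturbation_bound:
  fixes a L :: "'a::topological_space \<Rightarrow> real"
  assumes S: "compact S" "S \<noteq> {}" and a: "continuous_on S a" and L: "continuous_on S L"
    and pos: "0 < Sup (a ` S)" and bound: "\<And>v. v \<in> S \<Longrightarrow> \<bar>L v\<bar> \<le> b"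
  shows "\<bar>ln (Sup ((\<lambda>v. a v * exp (L v)) ` S)) - ln (Sup (a ` S))\<bar> \<le> b"
proof -
  obtain v0 where v0: "v0 \<in> S" "Sup (a ` S) = a v0" "\<And>v. v \<in> S \<Longrightarrow> a v \<le> a v0"
    using Sup_image_attained[OF S a] by blast
  have "continuous_on S (\<lambda>v. a v * exp (L v))"
    by (intro continuous_intros a L)
  then obtain x where x: "x \<in> S" "Sup ((\<lambda>v. a v * exp (L v)) ` S) = a x * exp (L x)"
    using Sup_image_attained[OF S] by blast
  have "0 < a v0"
    using pos v0(2) by simp
  then show ?thesis
    using Sup_mult_exp_maximizer_bounds(1,2)[OF S(1) a L v0(1) _ v0(3) x] bound[OF v0(1)]
      bound[OF x(1)] v0(2) by (simp add: abs_le_iff)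
qed

lemma tendsto_unique_maximizer:
  fixes a :: "'a::metric_space \<Rightarrow> real"
  assumes S: "compact S" and a: "continuous_on S a"
    and v0: "v0 \<in> S" "\<And>v. v \<in> S \<Longrightarrow> v \<noteq> v0 \<Longrightarrow> a v < a v0"
    and x: "\<forall>\<^sub>F t in F. x t \<in> S" and lim: "((\<lambda>t. a (x t)) \<longlongrightarrow> a v0) F"
  shows "(x \<longlongrightarrow> v0) F"
proof (rule tendstoI)
  fix \<epsilon> :: real
  assume \<epsilon>: "0 < \<epsilon>"
  define K where "K = S \<inter> {v. \<epsilon> \<le> dist v v0}"
  have "compact K"
    unfolding K_def by (intro compact_Int_closed S closed_Collect_le continuous_intros)
  show "\<forall>\<^sub>F t in F. dist (x t) v0 < \<epsilon>"
  proof (cases "K = {}")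
    case True
    show ?thesis
      using x by eventually_elim (use True in \<open>auto simp: K_def\<close>)
  next
    case False
    obtain w where w: "w \<in> K" "\<And>v. v \<in> K \<Longrightarrow> a v \<le> a w"
      using continuous_attains_sup[OF \<open>compact K\<close> False continuous_on_subset[OF a]]
      unfolding K_def by blast
    have "w \<noteq> v0"
      using w(1) \<epsilon> by (auto simp: K_def)
    then have "a w < a v0"
      using v0(2) w(1) by (auto simp: K_def)
    then have "\<forall>\<^sub>F t in F. a w < a (x t)"
      by (rule order_tendstoD(1)[OF lim])
    with x show ?thesis
    proof eventually_elim
      case (elim t)
      then have "x t \<notin> K"
        using w(2) by force
      then show ?case
        using elim by (auto simp: K_def)
    qed
  qed
qed

lemma perturbed_maximizers_tendsto:
  fixes S :: "'a::metric_space set" and a :: "'a \<Rightarrow> real"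
  assumes S: "compact S" and a: "continuous_on S a"
    and v0: "v0 \<in> S" "0 < a v0" "\<And>v. v \<in> S \<Longrightarrow> v \<noteq> v0 \<Longrightarrow> a v < a v0"
    and t0: "0 < t0" and L: "\<And>t. \<bar>t\<bar> \<le> t0 \<Longrightarrow> continuous_on S (L t)"
    and L_bound: "\<And>t v. \<bar>t\<bar> \<le> t0 \<Longrightarrow> v \<in> S \<Longrightarrow> \<bar>L t v\<bar> \<le> B * \<bar>t\<bar>"
  obtains x where "\<And>t. \<bar>t\<bar> \<le> t0 \<Longrightarrow> x t \<in> S"
    "\<And>t. \<bar>t\<bar> \<le> t0 \<Longrightarrow> Sup ((\<lambda>v. a v * exp (L t v)) ` S) = a (x t) * exp (L t (x t))"
    "(x \<longlongrightarrow> v0) (at 0)"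
proof -
  have amax: "a v \<le> a v0" if "v \<in> S" for v
    using v0 that by (cases "v = v0") (auto simp: less_imp_le)
  have "\<forall>t. \<exists>y. \<bar>t\<bar> \<le> t0 \<longrightarrow> y \<in> S \<and> Sup ((\<lambda>v. a v * exp (L t v)) ` S) = a y * exp (L t y)"
  proof
    fix t
    show "\<exists>y. \<bar>t\<bar> \<le> t0 \<longrightarrow> y \<in> S \<and> Sup ((\<lambda>v. a v * exp (L t v)) ` S) = a y * exp (L t y)"
    proof (cases "\<bar>t\<bar> \<le> t0")
      case True
      have "continuous_on S (\<lambda>v. a v * exp (L t v))"
        using a L[OF True] by (intro continuous_intros)
      then show ?thesis
        using Sup_image_attained[OF S] v0(1) by blast
    qed simp
  qed
  then obtain x where x: "\<And>t. \<bar>t\<bar> \<le> t0 \<Longrightarrow> x t \<in> S"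
    "\<And>t. \<bar>t\<bar> \<le> t0 \<Longrightarrow> Sup ((\<lambda>v. a v * exp (L t v)) ` S) = a (x t) * exp (L t (x t))"
    by metis
  have near: "\<forall>\<^sub>F t in at 0. \<bar>t\<bar> \<le> t0"
    using t0 by (auto simp: eventually_at dist_real_def intro!: exI[of _ t0])
  have "((\<lambda>t. a (x t)) \<longlongrightarrow> a v0) (at 0)"
  proof (rule tendsto_sandwich)
    show "\<forall>\<^sub>F t in at 0. a v0 * exp (- 2 * B * \<bar>t\<bar>) \<le> a (x t)"
      using near
    proof eventually_elim
      case (elim t)
      have "exp (- 2 * B * \<bar>t\<bar>) \<le> exp (L t v0 - L t (x t))"
        using L_bound[OF elim v0(1)] L_bound[OF elim x(1)[OF elim]] by simp
      then show ?case
        using Sup_mult_exp_maximizer_bounds(3)[OF S a L[OF elim] v0(1,2) amax x(1,2)[OF elim]] v0(2)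
        by (meson mult_left_mono less_imp_le order_trans)
    qed
    show "\<forall>\<^sub>F t in at 0. a (x t) \<le> a v0"
      using near by eventually_elim (use amax x in blast)
    show "((\<lambda>t. a v0 * exp (- 2 * B * \<bar>t\<bar>)) \<longlongrightarrow> a v0) (at 0)"
      by (auto intro!: tendsto_eq_intros)
  qed simp
  then have "(x \<longlongrightarrow> v0) (at 0)"
    using near x(1) by (intro tendsto_unique_maximizer[OF S a v0(1,3)]) (auto elim: eventually_mono)
  then show thesis
    using that x by blast
qed

text \<open>A form of Danskin's theorem.\<close>
lemma ln_Sup_exp_perturbation_has_derivative:
  fixes S :: "'a::metric_space set" and a k :: "'a \<Rightarrow> real"
  assumes S: "compact S" and a: "continuous_on S a" and k: "continuous_on S k"
    and v0: "v0 \<in> S" "0 < a v0" "\<And>v. v \<in> S \<Longrightarrow> v \<noteq> v0 \<Longrightarrow> a v < a v0"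
    and t0: "0 < t0" and L: "\<And>t. \<bar>t\<bar> \<le> t0 \<Longrightarrow> continuous_on S (L t)"
    and L_bound: "\<And>t v. \<bar>t\<bar> \<le> t0 \<Longrightarrow> v \<in> S \<Longrightarrow> \<bar>L t v\<bar> \<le> B * \<bar>t\<bar>"
    and L_taylor: "\<And>t v. \<bar>t\<bar> \<le> t0 \<Longrightarrow> v \<in> S \<Longrightarrow> \<bar>L t v - t * k v\<bar> \<le> B' * t\<^sup>2"
  shows "((\<lambda>t. ln (Sup ((\<lambda>v. a v * exp (L t v)) ` S))) has_real_derivative k v0) (at 0)"
proof -
  define \<Phi> where "\<Phi> t = Sup ((\<lambda>v. a v * exp (L t v)) ` S)" for t
  obtain x where x: "\<And>t. \<bar>t\<bar> \<le> t0 \<Longrightarrow> x t \<in> S" "\<And>t. \<bar>t\<bar> \<le> t0 \<Longrightarrow> \<Phi> t = a (x t) * exp (L t (x t))"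
    and x_lim: "(x \<longlongrightarrow> v0) (at 0)"
    using perturbed_maximizers_tendsto[OF S a v0 t0 L L_bound] unfolding \<Phi>_def by blast
  have amax: "a v \<le> a v0" if "v \<in> S" for v
    using v0 that by (cases "v = v0") (auto simp: less_imp_le)
  have bounds: "L t v0 \<le> ln (\<Phi> t) - ln (a v0)" "ln (\<Phi> t) - ln (a v0) \<le> L t (x t)" if t: "\<bar>t\<bar> \<le> t0" for t
    using Sup_mult_exp_maximizer_bounds[OF S a L[OF t] v0(1,2) amax x(1)[OF t] x(2)[OF t, unfolded \<Phi>_def]]
    unfolding \<Phi>_def by auto
  have near: "\<forall>\<^sub>F t in at 0. \<bar>t\<bar> \<le> t0"
    using t0 by (auto simp: eventually_at dist_real_def intro!: exI[of _ t0])
  have "((\<lambda>t. k (x t)) \<longlongrightarrow> k v0) (at 0)"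
    using near x(1) by (intro continuous_on_tendsto_compose[OF k x_lim v0(1)]) (auto elim: eventually_mono)
  moreover have "\<forall>\<^sub>F t in at 0. \<bar>L t (x t) - t * k (x t)\<bar> \<le> B' * t\<^sup>2"
    using near by eventually_elim (rule L_taylor[OF _ x(1)])
  ultimately have upper: "((\<lambda>t. L t (x t) / t) \<longlongrightarrow> k v0) (at 0)"
    by (intro tendsto_divide_if_quadratic_error)
  have "\<forall>\<^sub>F t in at 0. \<bar>L t v0 - t * k v0\<bar> \<le> B' * t\<^sup>2"
    using near by eventually_elim (rule L_taylor[OF _ v0(1)])
  then have lower: "((\<lambda>t. L t v0 / t) \<longlongrightarrow> k v0) (at 0)"
    by (rule tendsto_divide_if_quadratic_error[OF _ tendsto_const])
  have "\<forall>\<^sub>F t in at 0. L t v0 \<le> ln (\<Phi> t) - ln (a v0) \<and> ln (\<Phi> t) - ln (a v0) \<le> L t (x t)"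
    using near by eventually_elim (simp add: bounds)
  then have "((\<lambda>t. (ln (\<Phi> t) - ln (a v0)) / t) \<longlongrightarrow> k v0) (at 0)"
    using lower upper by (rule tendsto_divide_between)
  moreover have "ln (\<Phi> 0) = ln (a v0)"
    using bounds[of 0] L_bound[of 0 v0] L_bound[of 0 "x 0"] v0(1) x(1)[of 0] t0 by simp
  ultimately show ?thesis
    unfolding has_field_derivative_iff \<Phi>_def by simp
qed

section \<open>A null-set criterion and kinks of continuous functions\<close>

lemma sets_lborel_translate:
  fixes A :: "'a::euclidean_space set"
  assumes "A \<in> sets lborel"
  shows "(\<lambda>z. z - c) -` A \<in> sets lborel"
proof -
  have "(\<lambda>z::'a. z - c) \<in> borel_measurable borel"
    by (intro borel_measurable_continuous_onI continuous_intros)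
  from measurable_sets[OF this] show ?thesis
    using assms by simp
qed

lemma emeasure_lborel_translate:
  fixes A :: "'a::euclidean_space set"
  assumes "A \<in> sets lborel"
  shows "emeasure lborel ((\<lambda>z. z - c) -` A) = emeasure lborel A"
proof -
  have shift: "(+) (- c) = (\<lambda>z. z - c)"
    by (rule ext) simp
  have "emeasure lborel A = emeasure (distr lborel borel ((+) (- c))) A"
    by (simp add: lborel_distr_plus)
  also have "\<dots> = emeasure lborel ((\<lambda>z. z - c) -` A)"
    using assms by (subst emeasure_distr) (auto simp: shift)
  finally show ?thesis ..
qed

lemma ennreal_eq_0_if_multiples_bounded:
  fixes x C :: ennreal
  assumes bound: "\<And>m::nat. of_nat m * x \<le> C" and C: "C \<noteq> \<infinity>"
  shows "x = 0"
proof (rule ccontr)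
  assume "x \<noteq> 0"
  have "x \<noteq> \<infinity>"
    using bound[of 1] C by (auto simp: top_unique)
  then obtain a where a: "x = ennreal a" "0 < a"
    using \<open>x \<noteq> 0\<close> by (cases x rule: ennreal_cases) (auto simp: less_le)
  obtain c where c: "C = ennreal c" "0 \<le> c"
    using C by (cases C rule: ennreal_cases) auto
  obtain m :: nat where "c / a < real m"
    using reals_Archimedean2 by blast
  then have "c < real m * a"
    using a(2) by (simp add: divide_less_eq)
  moreover have "real m * a \<le> c"
    using bound[of m] a c by (simp add: ennreal_of_nat_eq_real_of_nat ennreal_le_iff flip: ennreal_mult)
  ultimately show False
    by simp
qed

text \<open>The translates of \<open>A\<close> by \<open>(i/m) b\<close>, \<open>i < m\<close>, are disjoint and lie in a fixed ball,
  so \<open>m * measure A\<close> is bounded independently of \<open>m\<close>.\<close>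
lemma null_sets_lborel_if_lines_meet_once_bounded:
  fixes A :: "'a::euclidean_space set"
  assumes A: "A \<in> sets lborel" "A \<subseteq> cball 0 \<rho>"
    and once: "\<And>x s. x \<in> A \<Longrightarrow> x + s *\<^sub>R b \<in> A \<Longrightarrow> s = 0"
  shows "A \<in> null_sets lborel"
proof -
  define T where "T m i = (\<lambda>z. z - (real i / real m) *\<^sub>R b) -` A" for m i :: nat
  have T_bounded: "T m i \<subseteq> cball 0 (\<rho> + norm b)" if "i < m" for m i
  proof
    fix z assume "z \<in> T m i"
    then have "norm (z - (real i / real m) *\<^sub>R b) \<le> \<rho>"
      using A(2) by (auto simp: T_def)
    moreover have "norm ((real i / real m) *\<^sub>R b) \<le> norm b"
      using that mult_right_mono[of "real i / real m" 1 "norm b"] by simp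
    ultimately show "z \<in> cball 0 (\<rho> + norm b)"
      using norm_triangle_sub[of z "(real i / real m) *\<^sub>R b"] by simp
  qed
  have T_disjoint: "disjoint_family_on (T m) {..<m}" for m
  proof (unfold disjoint_family_on_def, intro ballI impI equals0I)
    fix i j z assume ij: "i \<in> {..<m}" "j \<in> {..<m}" "i \<noteq> j" and z: "z \<in> T m i \<inter> T m j"
    define x where "x = z - (real i / real m) *\<^sub>R b"
    have "x \<in> A" "x + (real i / real m - real j / real m) *\<^sub>R b \<in> A"
      using z by (auto simp: T_def x_def algebra_simps)
    then have "real i / real m = real j / real m"
      using once by fastforce
    then show False
      using ij by (simp add: divide_cancel_right)
  qed
  have "of_nat m * emeasure lborel A \<le> emeasure lborel (cball (0::'a) (\<rho> + norm b))" for m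
  proof -
    have "of_nat m * emeasure lborel A = (\<Sum>i<m. emeasure lborel (T m i))"
      using A(1) by (simp add: T_def emeasure_lborel_translate)
    also have "\<dots> = emeasure lborel (\<Union>i<m. T m i)"
      using sets_lborel_translate[OF A(1)] by (intro sum_emeasure T_disjoint) (auto simp: T_def)
    also have "\<dots> \<le> emeasure lborel (cball (0::'a) (\<rho> + norm b))"
      using T_bounded by (intro emeasure_mono) auto
    finally show ?thesis .
  qed
  then have "emeasure lborel A = 0"
    using emeasure_lborel_cball_finite by (intro ennreal_eq_0_if_multiples_bounded) (auto simp: less_top)
  then show ?thesis
    using A(1) by (simp add: null_sets_def)
qed

lemma null_sets_lborel_if_lines_meet_once:
  fixes A :: "'a::euclidean_space set"
  assumes A: "A \<in> sets lborel" and once: "\<And>x s. x \<in> A \<Longrightarrow> x + s *\<^sub>R b \<in> A \<Longrightarrow> s = 0"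
  shows "A \<in> null_sets lborel"
proof -
  have "A \<inter> cball 0 (real n) \<in> null_sets lborel" for n
    using A once by (intro null_sets_lborel_if_lines_meet_once_bounded[where b = b]) auto
  then have "(\<Union>n. A \<inter> cball 0 (real n)) \<in> null_sets lborel"
    by (rule null_sets_UN)
  moreover have "(\<Union>n. A \<inter> cball 0 (real n)) = A"
    using real_arch_simple by (auto simp: dist_norm)
  ultimately show ?thesis
    by simp
qed

definition slope_jump_set :: "('a::real_vector \<Rightarrow> real) \<Rightarrow> 'a \<Rightarrow> real \<Rightarrow> real \<Rightarrow> 'a set" where
  "slope_jump_set g b a c =
     {x. (\<forall>s\<ge>0. g x + c * s \<le> g (x + s *\<^sub>R b)) \<and> (\<forall>s\<le>0. g x + a * s \<le> g (x + s *\<^sub>R b))}"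

lemma slope_jump_set_meets_lines_once:
  assumes "a < c" "x \<in> slope_jump_set g b a c" "x + s *\<^sub>R b \<in> slope_jump_set g b a c"
  shows "s = 0"
proof (rule ccontr)
  assume "s \<noteq> 0"
  define y where "y = x + s *\<^sub>R b"
  have x_eq: "y + (- s) *\<^sub>R b = x"
    by (simp add: y_def)
  have fwd: "\<forall>t\<ge>0. g x + c * t \<le> g (x + t *\<^sub>R b)" "\<forall>t\<le>0. g x + a * t \<le> g (x + t *\<^sub>R b)"
    and bwd: "\<forall>t\<ge>0. g y + c * t \<le> g (y + t *\<^sub>R b)" "\<forall>t\<le>0. g y + a * t \<le> g (y + t *\<^sub>R b)"
    using assms(2,3) unfolding slope_jump_set_def y_def by blast+
  consider "0 < s" | "s < 0"
    using \<open>s \<noteq> 0\<close> by linarith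
  then show False
  proof cases
    case 1
    have "g x + c * s \<le> g y" "g y + a * (- s) \<le> g x"
      using fwd(1)[rule_format, of s] bwd(2)[rule_format, of "- s"] 1 x_eq by (simp_all add: y_def)
    moreover have "a * s < c * s"
      using assms(1) 1 by (rule mult_strict_right_mono)
    ultimately show False
      by linarith
  next
    case 2
    have "g x + a * s \<le> g y" "g y + c * (- s) \<le> g x"
      using fwd(2)[rule_format, of s] bwd(1)[rule_format, of "- s"] 2 x_eq by (simp_all add: y_def)
    moreover have "c * s < a * s"
      using assms(1) 2 by (rule mult_strict_right_mono_neg)
    ultimately show False
      by linarith
  qed
qed

lemma closed_slope_jump_set:
  fixes g :: "'a::real_normed_vector \<Rightarrow> real"
  assumes "continuous_on UNIV g"
  shows "closed (slope_jump_set g b a c)"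
proof -
  have shifted: "continuous_on UNIV (\<lambda>x. g (x + s *\<^sub>R b))" for s
    by (rule continuous_on_compose2[OF assms]) (auto intro!: continuous_intros)
  have "slope_jump_set g b a c = (\<Inter>s\<in>{0..}. {x. g x + c * s \<le> g (x + s *\<^sub>R b)})
      \<inter> (\<Inter>s\<in>{..0}. {x. g x + a * s \<le> g (x + s *\<^sub>R b)})"
    by (auto simp: slope_jump_set_def)
  then show ?thesis
    by (simp only:) (intro closed_Int closed_INT ballI closed_Collect_le continuous_intros assms shifted)
qed

lemma null_sets_slope_jump_set:
  fixes g :: "'a::euclidean_space \<Rightarrow> real"
  assumes "continuous_on UNIV g" "a < c"
  shows "slope_jump_set g b a c \<in> null_sets lborel"
  using closed_slope_jump_set[OF assms(1)] slope_jump_set_meets_lines_once[OF assms(2)]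
  by (intro null_sets_lborel_if_lines_meet_once[where b = b]) auto

lemma slope_jump_set_if_two_linear_minorants:
  fixes g :: "'a::euclidean_space \<Rightarrow> real"
  assumes minor: "\<And>z. z \<bullet> y1 \<le> g z" "\<And>z. z \<bullet> y2 \<le> g z"
    and touch: "g x = x \<bullet> y1" "g x = x \<bullet> y2" and "y1 \<noteq> y2"
  obtains b a c where "b \<in> Basis" "a \<in> \<rat>" "c \<in> \<rat>" "a < c" "x \<in> slope_jump_set g b a c"
proof -
  obtain b where b: "b \<in> Basis" "b \<bullet> y1 \<noteq> b \<bullet> y2"
    using \<open>y1 \<noteq> y2\<close> by (metis euclidean_eqI inner_commute)
  define lo where "lo = min (b \<bullet> y1) (b \<bullet> y2)"
  define hi where "hi = max (b \<bullet> y1) (b \<bullet> y2)"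
  have "lo < hi"
    using b(2) by (auto simp: lo_def hi_def)
  then obtain a where a: "a \<in> \<rat>" "lo < a" "a < hi"
    using Rats_dense_in_real by blast
  obtain c where c: "c \<in> \<rat>" "a < c" "c < hi"
    using Rats_dense_in_real[OF a(3)] by blast
  have along: "g x + (b \<bullet> y) * s \<le> g (x + s *\<^sub>R b)" if "y = y1 \<or> y = y2" for s y
    using that minor[of "x + s *\<^sub>R b"] touch by (auto simp: inner_add_left mult.commute)
  define y_hi where "y_hi = (if b \<bullet> y1 \<le> b \<bullet> y2 then y2 else y1)"
  define y_lo where "y_lo = (if b \<bullet> y1 \<le> b \<bullet> y2 then y1 else y2)"
  have y_hi: "y_hi = y1 \<or> y_hi = y2" "b \<bullet> y_hi = hi"
    and y_lo: "y_lo = y1 \<or> y_lo = y2" "b \<bullet> y_lo = lo"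
    by (auto simp: y_hi_def y_lo_def hi_def lo_def)
  have "x \<in> slope_jump_set g b a c"
    unfolding slope_jump_set_def
  proof (intro CollectI conjI allI impI)
    fix s :: real
    assume "0 \<le> s"
    then have "c * s \<le> hi * s"
      using c by (intro mult_right_mono) auto
    then show "g x + c * s \<le> g (x + s *\<^sub>R b)"
      using along[OF y_hi(1), of s] y_hi(2) by simp
  next
    fix s :: real
    assume "s \<le> 0"
    then have "a * s \<le> lo * s"
      using a by (intro mult_right_mono_neg) auto
    then show "g x + a * s \<le> g (x + s *\<^sub>R b)"
      using along[OF y_lo(1), of s] y_lo(2) by simp
  qed
  then show thesis
    using that b(1) a c by blast
qed

text \<open>For convex \<open>g\<close> these are the points where \<open>g\<close> has two subgradients.\<close>
lemma null_sets_two_linear_minorants: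
  fixes g :: "'a::euclidean_space \<Rightarrow> real"
  assumes "continuous_on UNIV g"
  obtains N where "N \<in> null_sets lborel"
    "\<And>x y1 y2. (\<And>z. z \<bullet> y1 \<le> g z) \<Longrightarrow> (\<And>z. z \<bullet> y2 \<le> g z) \<Longrightarrow>
       g x = x \<bullet> y1 \<Longrightarrow> g x = x \<bullet> y2 \<Longrightarrow> y1 \<noteq> y2 \<Longrightarrow> x \<in> N"
proof
  define I :: "('a \<times> real \<times> real) set"
    where "I = {(b, a, c). b \<in> (Basis :: 'a set) \<and> a \<in> \<rat> \<and> c \<in> \<rat> \<and> a < c}"
  have "countable I"
    by (rule countable_subset[of _ "Basis \<times> \<rat> \<times> \<rat>"])
      (auto simp: I_def intro: countable_SIGMA countable_rat countable_finite[OF finite_Basis])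
  then show "(\<Union>(b, a, c)\<in>I. slope_jump_set g b a c) \<in> null_sets lborel"
    by (rule null_sets_UN') (auto simp: I_def intro: null_sets_slope_jump_set[OF assms])
  show "x \<in> (\<Union>(b, a, c)\<in>I. slope_jump_set g b a c)"
    if "\<And>z. z \<bullet> y1 \<le> g z" "\<And>z. z \<bullet> y2 \<le> g z" "g x = x \<bullet> y1" "g x = x \<bullet> y2" "y1 \<noteq> y2"
    for x y1 y2
    by (rule slope_jump_set_if_two_linear_minorants[OF that]) (auto simp: I_def)
qed

section \<open>The spherical Lebesgue measure\<close>

lemma space_sphere_measure: "space (sphere_measure :: 'a::euclidean_space measure) = sphere 0 1"
  by (simp add: sphere_measure_def space_restrict_space)

lemma sets_sphere_measure:
  "sets (sphere_measure :: 'a::euclidean_space measure) = sets (restrict_space borel (sphere 0 1))"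
  by (simp add: sphere_measure_def)

lemma borel_measurable_sphere_measure_continuous:
  "continuous_on (sphere 0 1) f \<Longrightarrow> f \<in> borel_measurable (sphere_measure :: 'a::euclidean_space measure)"
  by (simp add: measurable_cong_sets[OF sets_sphere_measure refl] borel_measurable_continuous_on_restrict)

lemma emeasure_sphere_measure:
  assumes A: "A \<in> sets borel" "A \<subseteq> sphere 0 1"
  shows "emeasure (sphere_measure :: 'a::euclidean_space measure) A =
    real DIM('a) * emeasure lborel ((\<lambda>x::'a. x /\<^sub>R norm x) -` A \<inter> (ball 0 1 - {0}))"
proof -
  have "(\<lambda>x::'a. x /\<^sub>R norm x) \<in> restrict_space lborel (ball 0 1 - {0}) \<rightarrow>\<^sub>M restrict_space borel (sphere 0 1)"
    by (rule measurable_restrict_space2) (auto intro!: measurable_restrict_space1)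
  then have "(\<lambda>x::'a. x /\<^sub>R norm x) \<in> scale_measure (real DIM('a)) (restrict_space lborel (ball 0 1 - {0}))
      \<rightarrow>\<^sub>M restrict_space borel (sphere 0 1)"
    by simp
  moreover have "A \<in> sets (restrict_space borel (sphere (0::'a) 1))"
    using A by (simp add: sets_restrict_space_iff)
  ultimately show ?thesis
    unfolding sphere_measure_def
    by (simp add: emeasure_distr emeasure_restrict_space space_restrict_space space_scale_measure)
qed

lemma null_sets_sphere_measureI:
  assumes "A \<in> sets borel" "A \<subseteq> sphere 0 1"
    and "(\<lambda>x::'a::euclidean_space. x /\<^sub>R norm x) -` A \<inter> (ball 0 1 - {0}) \<in> null_sets lborel"
  shows "A \<in> null_sets (sphere_measure :: 'a measure)"
  using assms emeasure_sphere_measure[OF assms(1,2)]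
  by (simp add: null_sets_def sets_sphere_measure sets_restrict_space_iff)

lemma finite_measure_sphere_measure: "finite_measure (sphere_measure :: 'a::euclidean_space measure)"
proof
  have "emeasure (sphere_measure :: 'a measure) (space sphere_measure)
      \<le> real DIM('a) * emeasure lborel (cball (0::'a) 1)"
    unfolding space_sphere_measure
    by (subst emeasure_sphere_measure) (auto intro!: mult_left_mono emeasure_mono)
  also have "\<dots> < \<infinity>"
    using emeasure_lborel_cball_finite[of "0::'a" 1] by (simp add: ennreal_mult_less_top)
  finally show "emeasure (sphere_measure :: 'a measure) (space sphere_measure) \<noteq> \<infinity>"
    by simp
qed

lemma integrable_sphere_measure_continuous:
  fixes f :: "'a::euclidean_space \<Rightarrow> real"
  assumes "continuous_on (sphere 0 1) f"
  shows "integrable (sphere_measure :: 'a measure) f"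
proof -
  obtain B where "\<forall>x\<in>sphere 0 1. norm (f x) \<le> B"
    using compact_imp_bounded[OF compact_continuous_image[OF assms compact_sphere]]
    unfolding bounded_iff by blast
  then show ?thesis
    using borel_measurable_sphere_measure_continuous[OF assms]
    by (intro finite_measure.integrable_const_bound[OF finite_measure_sphere_measure, where B = B])
      (auto simp: space_sphere_measure)
qed

section \<open>Convex bodies and their radial Gauss map\<close>

locale convex_body =
  fixes M :: "'a::euclidean_space set"
  assumes M: "convex_body_o M"
begin

abbreviation S :: "'a set" where "S \<equiv> sphere 0 1"
abbreviation h :: "'a \<Rightarrow> real" where "h \<equiv> support_fun M"
abbreviation G :: "'a \<Rightarrow> real" where "G \<equiv> wulff_gauge h"

lemmas h_cont = convex_body_o_support_fun_continuous[OF M]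
  and h_pos = convex_body_o_support_fun_pos[OF M]

lemma G_pos: "u \<in> S \<Longrightarrow> 0 < G u"
  by (rule wulff_gauge_pos[OF h_cont h_pos])

lemma G_cont: "continuous_on A G"
  by (rule continuous_on_wulff_gauge[OF h_cont h_pos])

lemma continuous_on_h_compose [continuous_intros]:
  "continuous_on A f \<Longrightarrow> continuous_on A (\<lambda>x. h (f x))"
  by (rule continuous_on_compose2[OF h_cont]) auto

lemma continuous_on_G_compose [continuous_intros]:
  "continuous_on A f \<Longrightarrow> continuous_on A (\<lambda>x. G (f x))"
  by (rule continuous_on_compose2[OF G_cont]) auto

lemma radial_fun_M: "u \<in> S \<Longrightarrow> radial_fun M u = 1 / G u"
  by (rule radial_fun_convex_body_o[OF M])

text \<open>\<open>is_normal u v\<close>: \<open>v\<close> is an outer unit normal of \<open>M\<close> at the boundary point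
  \<open>radial_fun M u *\<^sub>R u\<close>; equivalently \<open>v\<close> maximizes \<open>u \<bullet> v / h v\<close>, whose maximum is \<open>G u\<close>.\<close>
definition is_normal :: "'a \<Rightarrow> 'a \<Rightarrow> bool" where
  "is_normal u v \<longleftrightarrow> v \<in> S \<and> u \<bullet> v = G u * h v"

lemma is_normal_iff_supporting:
  assumes u: "u \<in> S" and v: "v \<in> S"
  shows "(radial_fun M u *\<^sub>R u) \<bullet> v = h v \<longleftrightarrow> is_normal u v"
  using G_pos[OF u] v by (auto simp: radial_fun_M[OF u] is_normal_def field_simps)

lemma is_normal_iff_maximizer: "v \<in> S \<Longrightarrow> is_normal u v \<longleftrightarrow> u \<bullet> v / h v = G u"
  using h_pos[of v] by (auto simp: is_normal_def field_simps)

lemma is_normal_exists: "\<exists>v. is_normal u v"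
proof -
  obtain v where "v \<in> S" "G u = u \<bullet> v / h v"
    using wulff_gauge_attained[OF h_cont h_pos] by blast
  then have "is_normal u v"
    using is_normal_iff_maximizer by simp
  then show ?thesis ..
qed

lemma closed_is_normal: "closed {z. is_normal (fst z) (snd z)}"
proof -
  have "{z. is_normal (fst z) (snd z)} = (UNIV \<times> S) \<inter> {z. fst z \<bullet> snd z = G (fst z) * h (snd z)}"
    by (auto simp: is_normal_def)
  then show ?thesis
    by (simp only:) (intro closed_Int closed_Times closed_UNIV closed_sphere closed_Collect_eq
        continuous_intros)
qed

definition smooth :: "'a set" where
  "smooth = {u \<in> S. \<exists>!v. is_normal u v}"

text \<open>\<open>smooth\<close> consists of the directions of the points of \<open>\<partial>'M\<close>, and \<open>radial_gauss\<close> is the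
  radial Gauss map \<open>\<alpha>\<^sub>M\<close> there. Off \<open>smooth\<close> it is an arbitrary fixed point of the sphere,
  which keeps it Borel measurable.\<close>
definition radial_gauss :: "'a \<Rightarrow> 'a" where
  "radial_gauss u = (if u \<in> smooth then THE v. is_normal u v else SOME v. v \<in> S)"

lemma radial_gauss_normal: "u \<in> smooth \<Longrightarrow> is_normal u (radial_gauss u)"
  unfolding smooth_def radial_gauss_def by (auto intro: theI')

lemma radial_gauss_unique: "u \<in> smooth \<Longrightarrow> is_normal u v \<Longrightarrow> v = radial_gauss u"
  using radial_gauss_normal unfolding smooth_def by blast

lemma radial_gauss_in_sphere: "radial_gauss u \<in> S"
proof (cases "u \<in> smooth")
  case True
  then show ?thesis
    using radial_gauss_normal by (simp add: is_normal_def)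
next
  case False
  have "S \<noteq> {}"
    by simp
  then show ?thesis
    using False some_in_eq[of S] by (simp add: radial_gauss_def)
qed

definition normal_pairs :: "real \<Rightarrow> ('a \<times> 'a \<times> 'a) set" where
  "normal_pairs e = {(u, v, w). u \<in> S \<and> is_normal u v \<and> is_normal u w \<and> e \<le> dist v w}"

lemma compact_normal_pairs: "compact (normal_pairs e)"
proof -
  have "closed {z :: 'a \<times> 'a \<times> 'a. is_normal (fst z) (fst (snd z))}"
    using continuous_closed_vimage[OF closed_is_normal, of "\<lambda>z. (fst z, fst (snd z))"]
    by (simp add: vimage_def continuous_intros)
  moreover have "closed {z :: 'a \<times> 'a \<times> 'a. is_normal (fst z) (snd (snd z))}"
    using continuous_closed_vimage[OF closed_is_normal, of "\<lambda>z. (fst z, snd (snd z))"]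
    by (simp add: vimage_def continuous_intros)
  moreover have "normal_pairs e = (S \<times> S \<times> S) \<inter> {z. is_normal (fst z) (fst (snd z))}
      \<inter> {z. is_normal (fst z) (snd (snd z))} \<inter> {z. e \<le> dist (fst (snd z)) (snd (snd z))}"
    by (auto simp: normal_pairs_def is_normal_def)
  ultimately show ?thesis
    by (simp only:) (intro compact_Int_closed closed_Collect_le continuous_intros compact_Times
        compact_sphere)
qed

lemma nonsmooth_eq_UN_normal_pairs: "S - smooth = (\<Union>m. fst ` normal_pairs (1 / Suc m))"
proof (intro set_eqI iffI)
  fix u assume u: "u \<in> S - smooth"
  then obtain v w where vw: "is_normal u v" "is_normal u w" "v \<noteq> w"
    using is_normal_exists[of u] by (auto simp: smooth_def)
  then obtain m where "inverse (real (Suc m)) < dist v w"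
    using reals_Archimedean by (metis dist_pos_lt)
  then have "(u, v, w) \<in> normal_pairs (1 / Suc m)"
    using u vw by (auto simp: normal_pairs_def field_simps)
  then show "u \<in> (\<Union>m. fst ` normal_pairs (1 / Suc m))"
    by force
next
  fix u assume "u \<in> (\<Union>m. fst ` normal_pairs (1 / Suc m))"
  then obtain m v w where uvw: "(u, v, w) \<in> normal_pairs (1 / Suc m)"
    by auto
  have "(0::real) < 1 / Suc m"
    by simp
  then have "v \<noteq> w"
    using uvw by (auto simp: normal_pairs_def)
  then show "u \<in> S - smooth"
    using uvw by (auto simp: normal_pairs_def smooth_def)
qed

lemma sets_borel_nonsmooth: "S - smooth \<in> sets borel"
proof -
  have "closed (fst ` normal_pairs e)" for e
    by (intro compact_imp_closed compact_continuous_image continuous_intros compact_normal_pairs)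
  then show ?thesis
    unfolding nonsmooth_eq_UN_normal_pairs by auto
qed

lemma normal_subgradient:
  assumes "is_normal u v"
  shows "z \<bullet> ((1 / h v) *\<^sub>R v) \<le> G z"
    and "0 \<le> l \<Longrightarrow> G (l *\<^sub>R u) = (l *\<^sub>R u) \<bullet> ((1 / h v) *\<^sub>R v)"
proof -
  have v: "v \<in> S" "u \<bullet> v = G u * h v"
    using assms by (auto simp: is_normal_def)
  show "z \<bullet> ((1 / h v) *\<^sub>R v) \<le> G z"
    using wulff_gauge_upper[OF h_cont h_pos v(1)] by simp
  show "G (l *\<^sub>R u) = (l *\<^sub>R u) \<bullet> ((1 / h v) *\<^sub>R v)" if "0 \<le> l"
    using wulff_gauge_scaleR[OF h_cont h_pos that] v h_pos[OF v(1)] by simp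
qed

lemma inj_on_normal_scaled: "inj_on (\<lambda>v. (1 / h v) *\<^sub>R v) S"
proof (rule inj_onI)
  fix v w assume v: "v \<in> S" and w: "w \<in> S" and eq: "(1 / h v) *\<^sub>R v = (1 / h w) *\<^sub>R w"
  have "1 / h v = 1 / h w"
    using arg_cong[OF eq, of norm] h_pos[OF v] h_pos[OF w] v w by simp
  then show "v = w"
    using eq h_pos[OF v] by simp
qed

text \<open>The cone over the non-smooth directions is a Lebesgue null set because there \<open>G\<close> has two
  distinct linear minorants touching it.\<close>
lemma null_sets_nonsmooth: "S - smooth \<in> null_sets (sphere_measure :: 'a measure)"
proof (rule null_sets_sphere_measureI[OF sets_borel_nonsmooth])
  obtain Z where Z: "Z \<in> null_sets lborel"
    "\<And>x y1 y2. (\<And>z. z \<bullet> y1 \<le> G z) \<Longrightarrow> (\<And>z. z \<bullet> y2 \<le> G z) \<Longrightarrow>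
       G x = x \<bullet> y1 \<Longrightarrow> G x = x \<bullet> y2 \<Longrightarrow> y1 \<noteq> y2 \<Longrightarrow> x \<in> Z"
    using null_sets_two_linear_minorants[OF G_cont] by blast
  let ?C = "(\<lambda>x::'a. x /\<^sub>R norm x) -` (S - smooth) \<inter> (ball 0 1 - {0})"
  have "?C \<subseteq> Z"
  proof
    fix x assume x: "x \<in> ?C"
    define u where "u = x /\<^sub>R norm x"
    have "u \<in> S" "u \<notin> smooth" and x_eq: "x = norm x *\<^sub>R u"
      using x by (auto simp: u_def)
    then obtain v w where vw: "is_normal u v" "is_normal u w" "v \<noteq> w"
      using is_normal_exists[of u] by (auto simp: smooth_def)
    then have "(1 / h v) *\<^sub>R v \<noteq> (1 / h w) *\<^sub>R w"
      using inj_on_normal_scaled by (auto simp: inj_on_def is_normal_def)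
    then show "x \<in> Z"
      using Z(2)[OF normal_subgradient(1)[OF vw(1)] normal_subgradient(1)[OF vw(2)]]
        normal_subgradient(2)[OF vw(1) norm_ge_zero] normal_subgradient(2)[OF vw(2) norm_ge_zero]
      by (metis x_eq)
  qed
  moreover have "(\<lambda>x::'a. x /\<^sub>R norm x) \<in> borel \<rightarrow>\<^sub>M borel"
    by measurable
  from measurable_sets[OF this sets_borel_nonsmooth]
  have "?C \<in> sets lborel"
    by (auto intro!: sets.Int sets.Diff borel_open borel_closed)
  ultimately show "?C \<in> null_sets lborel"
    using null_sets_subset[OF Z(1)] by blast
qed auto

lemma AE_smooth: "AE u in sphere_measure. u \<in> smooth"
  by (rule AE_I'[OF null_sets_nonsmooth]) (auto simp: space_sphere_measure)

lemma continuous_on_radial_gauss: "continuous_on smooth radial_gauss"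
proof -
  have "(\<lambda>u. (u, radial_gauss u)) ` smooth = (smooth \<times> S) \<inter> {z. is_normal (fst z) (snd z)}"
    using radial_gauss_normal radial_gauss_unique by (force simp: is_normal_def)
  then have "closedin (top_of_set (smooth \<times> S)) ((\<lambda>u. (u, radial_gauss u)) ` smooth)"
    using closed_is_normal by (simp add: closedin_closed_Int)
  then show ?thesis
    using continuous_closed_graph_eq[OF compact_sphere] radial_gauss_in_sphere by blast
qed

lemma measurable_radial_gauss: "radial_gauss \<in> sphere_measure \<rightarrow>\<^sub>M restrict_space borel S"
proof -
  have "S - (S - smooth) \<in> sets borel"
    by (rule sets.Diff[OF borel_closed[OF closed_sphere] sets_borel_nonsmooth])
  moreover have "S - (S - smooth) = smooth"
    by (auto simp: smooth_def)
  ultimately have "smooth \<in> sets borel"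
    by simp
  then have "radial_gauss \<in> borel_measurable borel"
    unfolding radial_gauss_def[abs_def]
    by (rule borel_measurable_continuous_on_if[OF _ _ continuous_on_const])
      (use continuous_on_radial_gauss in \<open>simp add: radial_gauss_def cong: continuous_on_cong\<close>)
  then show ?thesis
    using radial_gauss_in_sphere
    by (auto simp: measurable_cong_sets[OF sets_sphere_measure refl]
        intro!: measurable_restrict_space1 measurable_restrict_space2)
qed

lemma reverse_radial_gauss_iff:
  assumes u: "u \<in> smooth" and \<eta>: "\<eta> \<subseteq> S"
  shows "u \<in> reverse_radial_gauss M \<eta> \<longleftrightarrow> radial_gauss u \<in> \<eta>"
proof -
  have "u \<in> S"
    using u by (simp add: smooth_def)
  then have "u \<in> reverse_radial_gauss M \<eta> \<longleftrightarrow> (\<exists>v\<in>\<eta>. (radial_fun M u *\<^sub>R u) \<bullet> v = h v)"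
    by (simp add: reverse_radial_gauss_def)
  also have "\<dots> \<longleftrightarrow> (\<exists>v\<in>\<eta>. is_normal u v)"
    using is_normal_iff_supporting[OF \<open>u \<in> S\<close>] \<eta> by (intro bex_cong[OF refl]) blast
  also have "\<dots> \<longleftrightarrow> radial_gauss u \<in> \<eta>"
    using radial_gauss_normal[OF u] radial_gauss_unique[OF u] by blast
  finally show ?thesis .
qed

lemma AE_indicator_reverse_radial_gauss:
  assumes "\<eta> \<subseteq> S"
  shows "AE u in sphere_measure.
    indicator (reverse_radial_gauss M \<eta>) u = (indicator (radial_gauss -` \<eta> \<inter> S) u :: ennreal)"
  using AE_smooth
proof eventually_elim
  fix u assume u: "u \<in> smooth"
  then have "u \<in> S"
    by (simp add: smooth_def)
  then show "indicator (reverse_radial_gauss M \<eta>) u = (indicator (radial_gauss -` \<eta> \<inter> S) u :: ennreal)"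
    using reverse_radial_gauss_iff[OF u assms] by (simp add: indicator_def)
qed

end

section \<open>Dual mixed quermassintegrals and curvature measures\<close>

definition dual_mixed_density :: "real \<Rightarrow> real \<Rightarrow> 'a::euclidean_space set \<Rightarrow> 'a set \<Rightarrow> 'a \<Rightarrow> real" where
  "dual_mixed_density q j M Q u =
     (1 / real DIM('a)) * (radial_fun M u powr q * radial_fun Q u powr (real DIM('a) - q - j))"

lemma dual_mixed_quermass_eq_integral:
  "dual_mixed_quermass q j M Q = (\<integral>u. dual_mixed_density q j M Q u \<partial>sphere_measure)"
  by (simp add: dual_mixed_quermass_def dual_mixed_density_def)

lemma star_body_o_radial_fun_powr_continuous:
  assumes "star_body_o Q"
  shows "continuous_on (sphere 0 1) (\<lambda>u. radial_fun Q u powr e)"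
proof -
  have "continuous_on (sphere 0 1) (radial_fun Q)"
    using assms by (auto simp: star_body_o_def intro: continuous_on_subset)
  moreover have "radial_fun Q u \<noteq> 0" if "u \<in> sphere 0 1" for u
  proof -
    have "u \<noteq> 0"
      using that by auto
    then show ?thesis
      using assms unfolding star_body_o_def by force
  qed
  ultimately show ?thesis
    by (intro continuous_on_powr continuous_on_const) auto
qed

context convex_body
begin

lemma radial_fun_M_powr_continuous: "continuous_on S (\<lambda>u. radial_fun M u powr q)"
proof -
  have "continuous_on S (\<lambda>u. (1 / G u) powr q)"
    using G_pos by (intro continuous_on_powr continuous_intros) force+
  then show ?thesis
    by (rule continuous_on_eq) (simp add: radial_fun_M)
qed

lemma continuous_on_dual_mixed_density:
  "star_body_o Q \<Longrightarrow> continuous_on S (dual_mixed_density q j M Q)"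
  unfolding dual_mixed_density_def[abs_def]
  by (intro continuous_intros radial_fun_M_powr_continuous star_body_o_radial_fun_powr_continuous)

lemma dual_mixed_curv_eq_distr:
  assumes Q: "star_body_o Q"
  shows "dual_mixed_curv q j M Q =
    distr (density sphere_measure (\<lambda>u. ennreal (dual_mixed_density q j M Q u)))
      (restrict_space borel S) radial_gauss"
    (is "_ = ?D")
proof -
  have density_meas: "(\<lambda>u. ennreal (dual_mixed_density q j M Q u)) \<in> borel_measurable sphere_measure"
    using borel_measurable_sphere_measure_continuous[OF continuous_on_dual_mixed_density[OF Q]]
    by simp
  have gauss_meas: "radial_gauss \<in> density sphere_measure (\<lambda>u. ennreal (dual_mixed_density q j M Q u))
      \<rightarrow>\<^sub>M restrict_space borel S"
    using measurable_radial_gauss by (simp add: measurable_cong_sets[OF sets_density refl])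
  have "?D = measure_of S (sets (restrict_space borel S)) (emeasure ?D)"
    using measure_of_of_measure[of ?D] by (simp add: space_restrict_space)
  also have "\<dots> = dual_mixed_curv q j M Q"
    unfolding dual_mixed_curv_def
  proof (rule measure_of_eq)
    show "sets (restrict_space borel S) \<subseteq> Pow S"
      by (auto simp: sets_restrict_space)
    fix \<eta> assume "\<eta> \<in> sigma_sets S (sets (restrict_space borel S))"
    then have \<eta>: "\<eta> \<in> sets (restrict_space borel S)"
      using sets.sigma_sets_eq[of "restrict_space borel S"] by (simp add: space_restrict_space)
    then have "\<eta> \<subseteq> S"
      using sets.sets_into_space by (fastforce simp: space_restrict_space)
    have "radial_gauss -` \<eta> \<inter> S \<in> sets sphere_measure"
      using measurable_sets[OF measurable_radial_gauss \<eta>] by (simp add: space_sphere_measure)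
    then have "emeasure ?D \<eta> =
        (\<integral>\<^sup>+ u. ennreal (dual_mixed_density q j M Q u) * indicator (radial_gauss -` \<eta> \<inter> S) u
          \<partial>sphere_measure)"
      using \<eta> by (simp add: emeasure_distr[OF gauss_meas] emeasure_density[OF density_meas]
          space_sphere_measure)
    also have "\<dots> = (\<integral>\<^sup>+ u. indicator (reverse_radial_gauss M \<eta>) u *
        ennreal (dual_mixed_density q j M Q u) \<partial>sphere_measure)"
      using AE_indicator_reverse_radial_gauss[OF \<open>\<eta> \<subseteq> S\<close>]
      by (auto intro!: nn_integral_cong_AE elim!: eventually_mono simp: mult.commute)
    finally show "emeasure ?D \<eta> = (\<integral>\<^sup>+ u. indicator (reverse_radial_gauss M \<eta>) u *
        ennreal ((1 / real DIM('a)) * (radial_fun M u powr q * radial_fun Q u powr (real DIM('a) - q - j)))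
        \<partial>sphere_measure)"
      by (simp add: dual_mixed_density_def)
  qed
  finally show ?thesis ..
qed

lemma integral_dual_mixed_curv:
  assumes Q: "star_body_o Q" and f: "continuous_on S f"
  shows "(\<integral>v. f v \<partial>dual_mixed_curv q j M Q) =
    (\<integral>u. dual_mixed_density q j M Q u * f (radial_gauss u) \<partial>sphere_measure)"
proof -
  have f_meas: "f \<in> borel_measurable (restrict_space borel S)"
    by (rule borel_measurable_continuous_on_restrict[OF f])
  have "(\<integral>v. f v \<partial>dual_mixed_curv q j M Q) =
      (\<integral>u. f (radial_gauss u) \<partial>density sphere_measure (\<lambda>u. ennreal (dual_mixed_density q j M Q u)))"
    unfolding dual_mixed_curv_eq_distr[OF Q] using measurable_radial_gauss
    by (intro integral_distr[OF _ f_meas]) (simp add: measurable_cong_sets[OF sets_density refl])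
  also have "\<dots> = (\<integral>u. dual_mixed_density q j M Q u * f (radial_gauss u) \<partial>sphere_measure)"
    using borel_measurable_sphere_measure_continuous[OF continuous_on_dual_mixed_density[OF Q]]
      measurable_compose[OF measurable_radial_gauss f_meas]
    by (subst integral_density) (auto simp: dual_mixed_density_def)
  finally show ?thesis .
qed

end

section \<open>The \<open>L\<^sub>p\<close> perturbation and its first variation\<close>

locale Lp_perturbation = convex_body M for M :: "'a::euclidean_space set" +
  fixes N :: "'a set" and p :: real
  assumes N: "convex_body_o N" and p: "p \<noteq> 0"
begin

definition k :: "'a \<Rightarrow> real" where
  "k v = support_fun N v powr p / h v powr p"

definition K :: real where
  "K = Sup (k ` S)"

definition t0 :: real where
  "t0 = 1 / (2 * K)"

definition L :: "real \<Rightarrow> 'a \<Rightarrow> real" where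
  "L t v = - ln (1 + t * k v) / p"

lemma k_pos: "v \<in> S \<Longrightarrow> 0 < k v"
  using h_pos[of v] convex_body_o_support_fun_pos[OF N, of v] by (simp add: k_def)

lemma k_cont: "continuous_on S k"
  unfolding k_def using h_pos convex_body_o_support_fun_pos[OF N]
  by (intro continuous_intros continuous_on_powr h_cont convex_body_o_support_fun_continuous[OF N])
    (auto simp: less_imp_neq[symmetric])

lemma k_le_K: "v \<in> S \<Longrightarrow> k v \<le> K"
  unfolding K_def by (rule Sup_image_upper[OF compact_sphere k_cont])

lemma K_pos: "0 < K"
proof -
  obtain b :: 'a where "b \<in> Basis"
    using nonempty_Basis by blast
  then have "b \<in> S"
    by simp
  then show ?thesis
    using k_pos k_le_K by (meson less_le_trans)
qed

lemma t0_pos: "0 < t0"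
  using K_pos by (simp add: t0_def)

lemma abs_mult_k_le_half: "\<bar>t\<bar> \<le> t0 \<Longrightarrow> v \<in> S \<Longrightarrow> \<bar>t * k v\<bar> \<le> 1 / 2"
proof -
  assume t: "\<bar>t\<bar> \<le> t0" and v: "v \<in> S"
  have "\<bar>t * k v\<bar> \<le> t0 * K"
    using t k_le_K[OF v] k_pos[OF v] by (simp add: abs_mult mult_mono)
  also have "\<dots> = 1 / 2"
    using K_pos by (simp add: t0_def)
  finally show ?thesis .
qed

lemma one_plus_mult_k_pos: "\<bar>t\<bar> \<le> t0 \<Longrightarrow> v \<in> S \<Longrightarrow> 0 < 1 + t * k v"
  using abs_mult_k_le_half by (fastforce simp: abs_le_iff)

lemma L_cont: "\<bar>t\<bar> \<le> t0 \<Longrightarrow> continuous_on S (L t)"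
  unfolding L_def using one_plus_mult_k_pos p by (intro continuous_intros k_cont continuous_on_ln) force+

lemma L_zero: "L 0 v = 0"
  by (simp add: L_def)

lemma L_bound: "\<bar>t\<bar> \<le> t0 \<Longrightarrow> v \<in> S \<Longrightarrow> \<bar>L t v\<bar> \<le> 2 * K / \<bar>p\<bar> * \<bar>t\<bar>"
proof -
  assume t: "\<bar>t\<bar> \<le> t0" and v: "v \<in> S"
  have "\<bar>L t v\<bar> = \<bar>ln (1 + t * k v)\<bar> / \<bar>p\<bar>"
    by (simp add: L_def)
  also have "\<dots> \<le> 2 * \<bar>t * k v\<bar> / \<bar>p\<bar>"
    using abs_ln_one_plus_le[OF abs_mult_k_le_half[OF t v]] by (simp add: divide_right_mono)
  also have "\<dots> \<le> 2 * (K * \<bar>t\<bar>) / \<bar>p\<bar>"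
    using k_le_K[OF v] k_pos[OF v] by (intro divide_right_mono mult_left_mono)
      (auto simp: abs_mult mult.commute mult_left_mono)
  finally show ?thesis
    by simp
qed

lemma L_taylor:
  "\<bar>t\<bar> \<le> t0 \<Longrightarrow> v \<in> S \<Longrightarrow> \<bar>L t v - t * (- k v / p)\<bar> \<le> 2 * K\<^sup>2 / \<bar>p\<bar> * t\<^sup>2"
proof -
  assume t: "\<bar>t\<bar> \<le> t0" and v: "v \<in> S"
  have "\<bar>L t v - t * (- k v / p)\<bar> = \<bar>ln (1 + t * k v) - t * k v\<bar> / \<bar>p\<bar>"
    using p by (simp add: L_def field_simps abs_minus_commute)
  also have "\<dots> \<le> 2 * (t * k v)\<^sup>2 / \<bar>p\<bar>"
    using abs_ln_one_plus_x_minus_x_bound[OF abs_mult_k_le_half[OF t v]] by (simp add: divide_right_mono)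
  also have "\<dots> \<le> 2 * K\<^sup>2 / \<bar>p\<bar> * t\<^sup>2"
    using k_le_K[OF v] k_pos[OF v]
    by (simp add: power_mult_distrib divide_right_mono mult_left_mono mult.commute power_mono)
  finally show ?thesis .
qed

lemma Lp_comb_eq_wulff_shape:
  assumes t: "\<bar>t\<bar> \<le> t0"
  shows "Lp_comb p M t N = wulff_shape (\<lambda>v. h v * exp (- L t v))"
proof -
  have "(h v powr p + t * support_fun N v powr p) powr (1 / p) = h v * exp (- L t v)"
    if v: "v \<in> S" for v
  proof -
    have "h v powr p + t * support_fun N v powr p = h v powr p * (1 + t * k v)"
      using h_pos[OF v] by (simp add: k_def field_simps)
    then have "(h v powr p + t * support_fun N v powr p) powr (1 / p)
        = (h v powr p) powr (1 / p) * (1 + t * k v) powr (1 / p)"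
      using one_plus_mult_k_pos[OF t v] by (simp add: powr_mult)
    also have "(h v powr p) powr (1 / p) = h v"
      using h_pos[OF v] p by (simp add: powr_powr)
    also have "(1 + t * k v) powr (1 / p) = exp (- L t v)"
      using one_plus_mult_k_pos[OF t v] by (simp add: powr_def L_def)
    finally show ?thesis .
  qed
  then show ?thesis
    by (auto simp: Lp_comb_def wulff_shape_def)
qed

definition Phi :: "real \<Rightarrow> 'a \<Rightarrow> real" where
  "Phi t u = Sup ((\<lambda>v. u \<bullet> v / h v * exp (L t v)) ` S)"

lemma Phi_zero: "Phi 0 u = G u"
  by (simp add: Phi_def L_zero wulff_gauge_def)

lemma perturbed_support_cont: "\<bar>t\<bar> \<le> t0 \<Longrightarrow> continuous_on S (\<lambda>v. h v * exp (- L t v))"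
  by (intro continuous_intros h_cont L_cont)

lemma perturbed_support_pos: "v \<in> S \<Longrightarrow> 0 < h v * exp (- L t v)"
  using h_pos by simp

lemma wulff_gauge_perturbed_support:
  "\<bar>t\<bar> \<le> t0 \<Longrightarrow> wulff_gauge (\<lambda>v. h v * exp (- L t v)) u = Phi t u"
  unfolding wulff_gauge_def Phi_def by (simp add: exp_minus field_simps)

lemma radial_fun_Lp_comb:
  assumes "\<bar>t\<bar> \<le> t0" "u \<in> S"
  shows "radial_fun (Lp_comb p M t N) u = 1 / Phi t u"
  using radial_fun_wulff_shape[OF perturbed_support_cont[OF assms(1)] perturbed_support_pos assms(2)]
  by (simp add: Lp_comb_eq_wulff_shape[OF assms(1)] wulff_gauge_perturbed_support[OF assms(1)])

lemma Phi_pos: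
  assumes "\<bar>t\<bar> \<le> t0" "u \<in> S"
  shows "0 < Phi t u"
  using wulff_gauge_pos[OF perturbed_support_cont[OF assms(1)] perturbed_support_pos assms(2)]
  by (simp add: wulff_gauge_perturbed_support[OF assms(1)])

lemma continuous_on_Phi:
  assumes "\<bar>t\<bar> \<le> t0"
  shows "continuous_on S (Phi t)"
  using continuous_on_wulff_gauge[OF perturbed_support_cont[OF assms] perturbed_support_pos]
  by (simp add: wulff_gauge_perturbed_support[OF assms])

lemma ln_Phi_bound:
  assumes t: "\<bar>t\<bar> \<le> t0" and u: "u \<in> S"
  shows "\<bar>ln (Phi t u) - ln (G u)\<bar> \<le> 2 * K / \<bar>p\<bar> * \<bar>t\<bar>"
proof -
  have "continuous_on S (\<lambda>v. u \<bullet> v / h v)"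
    by (rule continuous_on_inner_divide[OF h_cont h_pos])
  moreover have "0 < Sup ((\<lambda>v. u \<bullet> v / h v) ` S)"
    using G_pos[OF u] by (simp add: wulff_gauge_def)
  ultimately show ?thesis
    unfolding Phi_def wulff_gauge_def
    by (intro ln_Sup_exp_perturbation_bound[where a = "\<lambda>v. u \<bullet> v / h v", OF compact_sphere _ _
          L_cont[OF t] _ L_bound[OF t]]) auto
qed

lemma radial_fun_Lp_comb_powr:
  assumes "\<bar>t\<bar> \<le> t0" "u \<in> S"
  shows "radial_fun (Lp_comb p M t N) u powr q = exp (- q * ln (Phi t u))"
  using Phi_pos[OF assms] by (simp add: radial_fun_Lp_comb[OF assms] powr_def ln_div)

lemma radial_fun_Lp_comb_zero: "u \<in> S \<Longrightarrow> radial_fun (Lp_comb p M 0 N) u = radial_fun M u"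
  using radial_fun_Lp_comb[of 0 u] t0_pos by (simp add: Phi_zero radial_fun_M)

lemma continuous_on_radial_fun_Lp_comb_powr:
  assumes t: "\<bar>t\<bar> \<le> t0"
  shows "continuous_on S (\<lambda>u. radial_fun (Lp_comb p M t N) u powr q)"
proof -
  have "continuous_on S (\<lambda>u. exp (- q * ln (Phi t u)))"
    using Phi_pos[OF t] by (intro continuous_intros continuous_on_Phi[OF t]) (metis less_irrefl)
  then show ?thesis
    by (rule continuous_on_eq) (simp add: radial_fun_Lp_comb_powr[OF t])
qed

text \<open>At a smooth direction the maximum defining \<open>Phi 0 u\<close> is attained only at the normal,
  so Danskin's theorem applies.\<close>
lemma ln_Phi_has_derivative:
  assumes u: "u \<in> smooth"
  shows "((\<lambda>t. ln (Phi t u)) has_real_derivative - k (radial_gauss u) / p) (at 0)"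
proof -
  have "u \<in> S"
    using u by (simp add: smooth_def)
  have a: "continuous_on S (\<lambda>v. u \<bullet> v / h v)"
    by (rule continuous_on_inner_divide[OF h_cont h_pos])
  have k': "continuous_on S (\<lambda>v. - k v / p)"
    using k_cont p by (intro continuous_intros) auto
  have normal: "u \<bullet> radial_gauss u / h (radial_gauss u) = G u"
    using radial_gauss_normal[OF u] radial_gauss_in_sphere is_normal_iff_maximizer by blast
  have unique: "u \<bullet> v / h v < u \<bullet> radial_gauss u / h (radial_gauss u)"
    if "v \<in> S" "v \<noteq> radial_gauss u" for v
    using wulff_gauge_upper[OF h_cont h_pos that(1), of u] radial_gauss_unique[OF u, of v]
      is_normal_iff_maximizer[OF that(1)] that(2) normal by fastforce
  show ?thesis
    unfolding Phi_def
    by (rule ln_Sup_exp_perturbation_has_derivative[OF compact_sphere a k'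
          radial_gauss_in_sphere _ unique t0_pos L_cont L_bound L_taylor])
      (use normal G_pos[OF \<open>u \<in> S\<close>] in simp)
qed

lemma radial_fun_Lp_comb_powr_has_derivative:
  assumes u: "u \<in> smooth"
  shows "((\<lambda>t. radial_fun (Lp_comb p M t N) u powr q)
    has_real_derivative q / p * k (radial_gauss u) * radial_fun M u powr q) (at 0)"
proof -
  have "u \<in> S"
    using u by (simp add: smooth_def)
  have "((\<lambda>t. exp (- q * ln (Phi t u)))
      has_real_derivative exp (- q * ln (Phi 0 u)) * (- q * (- k (radial_gauss u) / p))) (at 0)"
    by (intro DERIV_chain'[where g = exp] DERIV_cmult ln_Phi_has_derivative[OF u] DERIV_exp)
  moreover have "exp (- q * ln (Phi 0 u)) = radial_fun M u powr q"
    using radial_fun_Lp_comb_powr[of 0 u] radial_fun_Lp_comb_zero \<open>u \<in> S\<close> t0_pos by simp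
  ultimately have "((\<lambda>t. exp (- q * ln (Phi t u)))
      has_real_derivative q / p * k (radial_gauss u) * radial_fun M u powr q) (at 0)"
    by (simp add: field_simps)
  then show ?thesis
    by (rule has_field_derivative_transform_within_open[where S = "ball 0 t0"])
      (use t0_pos \<open>u \<in> S\<close> in \<open>auto simp: radial_fun_Lp_comb_powr\<close>)
qed

lemma radial_fun_Lp_comb_powr_quotient_bound:
  fixes q :: real
  assumes t: "\<bar>t\<bar> \<le> t0" "t \<noteq> 0" and u: "u \<in> S"
  defines "B \<equiv> \<bar>q\<bar> * (2 * K / \<bar>p\<bar>)"
  shows "\<bar>(radial_fun (Lp_comb p M t N) u powr q - radial_fun M u powr q) / t\<bar>
    \<le> B * exp (B * t0) * radial_fun M u powr q"
proof -
  define x where "x = - q * (ln (Phi t u) - ln (G u))"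
  have B: "0 \<le> B"
    using K_pos by (simp add: B_def)
  have x_t: "\<bar>x\<bar> \<le> B * \<bar>t\<bar>"
    unfolding x_def abs_mult abs_minus_cancel B_def
    using mult_left_mono[OF ln_Phi_bound[OF t(1) u] abs_ge_zero[of q]] by (simp add: mult_ac)
  also have "\<dots> \<le> B * t0"
    using t(1) B by (rule mult_left_mono)
  finally have x_t0: "\<bar>x\<bar> \<le> B * t0" .
  have "radial_fun (Lp_comb p M t N) u powr q - radial_fun M u powr q
      = radial_fun M u powr q * (exp x - 1)"
    using radial_fun_Lp_comb_powr[OF t(1) u] radial_fun_Lp_comb_powr[of 0 u]
      radial_fun_Lp_comb_zero[OF u] u t0_pos
    by (simp add: x_def Phi_zero algebra_simps flip: exp_add)
  moreover have "\<bar>exp x - 1\<bar> \<le> B * \<bar>t\<bar> * exp (B * t0)"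
    using abs_exp_minus_one_le[of x] mult_mono[OF x_t exp_mono[OF x_t0]] B by simp
  ultimately have "\<bar>radial_fun (Lp_comb p M t N) u powr q - radial_fun M u powr q\<bar>
      \<le> radial_fun M u powr q * (B * \<bar>t\<bar> * exp (B * t0))"
    by (simp add: abs_mult mult_left_mono)
  then show ?thesis
    using t(2) by (simp add: divide_le_eq mult_ac)
qed

lemma integral_pq_dual_mixed_curv:
  assumes Q: "star_body_o Q"
  shows "(\<integral>v. support_fun N v powr p \<partial>pq_dual_mixed_curv p q j M Q) =
    (\<integral>u. dual_mixed_density q j M Q u * k (radial_gauss u) \<partial>sphere_measure)"
proof -
  let ?C = "dual_mixed_curv q j M Q"
  have sets_C: "sets ?C = sets (restrict_space borel S)" and space_C: "space ?C = S"
    by (simp_all add: dual_mixed_curv_eq_distr[OF Q] space_restrict_space)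
  have "continuous_on S (\<lambda>v. support_fun N v powr p)" "continuous_on S (\<lambda>v. h v powr - p)"
    using convex_body_o_support_fun_pos[OF N] h_pos
    by (auto intro!: continuous_on_powr convex_body_o_support_fun_continuous[OF N] h_cont
        continuous_on_const simp: less_imp_neq[symmetric])
  then have meas: "(\<lambda>v. support_fun N v powr p) \<in> borel_measurable ?C"
      "(\<lambda>v. h v powr - p) \<in> borel_measurable ?C"
    by (simp_all add: measurable_cong_sets[OF sets_C refl] borel_measurable_continuous_on_restrict)
  have "(\<integral>v. support_fun N v powr p \<partial>pq_dual_mixed_curv p q j M Q) =
      (\<integral>v. h v powr - p * support_fun N v powr p \<partial>?C)"
    unfolding pq_dual_mixed_curv_def by (simp add: integral_density[OF meas(1,2)])
  also have "\<dots> = (\<integral>v. k v \<partial>?C)"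
    using h_pos by (intro Bochner_Integration.integral_cong) (auto simp: space_C k_def powr_minus_divide)
  also have "\<dots> = (\<integral>u. dual_mixed_density q j M Q u * k (radial_gauss u) \<partial>sphere_measure)"
    by (rule integral_dual_mixed_curv[OF Q k_cont])
  finally show ?thesis .
qed

lemma continuous_on_dual_mixed_density_Lp_comb:
  "star_body_o Q \<Longrightarrow> \<bar>t\<bar> \<le> t0 \<Longrightarrow> continuous_on S (dual_mixed_density q j (Lp_comb p M t N) Q)"
  unfolding dual_mixed_density_def[abs_def]
  by (intro continuous_intros continuous_on_radial_fun_Lp_comb_powr star_body_o_radial_fun_powr_continuous)

lemma dual_mixed_density_Lp_comb_quotient:
  "(dual_mixed_density q j (Lp_comb p M t N) Q u - dual_mixed_density q j M Q u) / t =
    (radial_fun (Lp_comb p M t N) u powr q - radial_fun M u powr q) / t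
      * (radial_fun Q u powr (real DIM('a) - q - j) / real DIM('a))"
  by (simp add: dual_mixed_density_def field_simps)

lemma dual_mixed_density_Lp_comb_quotient_tendsto:
  assumes u: "u \<in> smooth"
  shows "((\<lambda>t. (dual_mixed_density q j (Lp_comb p M t N) Q u - dual_mixed_density q j M Q u) / t)
    \<longlongrightarrow> q / p * (dual_mixed_density q j M Q u * k (radial_gauss u))) (at 0)"
proof -
  have "u \<in> S"
    using u by (simp add: smooth_def)
  then have "((\<lambda>t. (radial_fun (Lp_comb p M t N) u powr q - radial_fun M u powr q) / t)
      \<longlongrightarrow> q / p * k (radial_gauss u) * radial_fun M u powr q) (at 0)"
    using radial_fun_Lp_comb_powr_has_derivative[OF u]
    by (simp add: has_field_derivative_iff radial_fun_Lp_comb_zero)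
  then have "((\<lambda>t. (radial_fun (Lp_comb p M t N) u powr q - radial_fun M u powr q) / t
      * (radial_fun Q u powr (real DIM('a) - q - j) / real DIM('a)))
      \<longlongrightarrow> q / p * k (radial_gauss u) * radial_fun M u powr q
        * (radial_fun Q u powr (real DIM('a) - q - j) / real DIM('a))) (at 0)"
    by (rule tendsto_mult_right)
  moreover have "q / p * k (radial_gauss u) * radial_fun M u powr q
      * (radial_fun Q u powr (real DIM('a) - q - j) / real DIM('a))
      = q / p * (dual_mixed_density q j M Q u * k (radial_gauss u))"
    by (simp add: dual_mixed_density_def)
  ultimately show ?thesis
    unfolding dual_mixed_density_Lp_comb_quotient by (simp only:)
qed

lemma dual_mixed_density_Lp_comb_quotient_bound:
  fixes q :: real
  assumes t: "\<bar>t\<bar> \<le> t0" "t \<noteq> 0" and u: "u \<in> S"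
  defines "B \<equiv> \<bar>q\<bar> * (2 * K / \<bar>p\<bar>)"
  shows "\<bar>(dual_mixed_density q j (Lp_comb p M t N) Q u - dual_mixed_density q j M Q u) / t\<bar>
    \<le> B * exp (B * t0) * dual_mixed_density q j M Q u"
proof -
  have "\<bar>(dual_mixed_density q j (Lp_comb p M t N) Q u - dual_mixed_density q j M Q u) / t\<bar>
      = \<bar>(radial_fun (Lp_comb p M t N) u powr q - radial_fun M u powr q) / t\<bar>
        * (radial_fun Q u powr (real DIM('a) - q - j) / real DIM('a))"
    by (simp add: dual_mixed_density_Lp_comb_quotient abs_mult)
  also have "\<dots> \<le> (B * exp (B * t0) * radial_fun M u powr q)
      * (radial_fun Q u powr (real DIM('a) - q - j) / real DIM('a))"
    using radial_fun_Lp_comb_powr_quotient_bound[OF t u, of q, folded B_def]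
    by (rule mult_right_mono) simp
  also have "\<dots> = B * exp (B * t0) * dual_mixed_density q j M Q u"
    by (simp add: dual_mixed_density_def)
  finally show ?thesis .
qed

lemma dual_mixed_quermass_Lp_comb_tendsto:
  assumes Q: "star_body_o Q"
  shows "((\<lambda>t. (dual_mixed_quermass q j (Lp_comb p M t N) Q - dual_mixed_quermass q j M Q) / t)
    \<longlongrightarrow> q / p * (\<integral>u. dual_mixed_density q j M Q u * k (radial_gauss u) \<partial>sphere_measure)) (at 0)"
proof -
  define s where "s t u = (dual_mixed_density q j (Lp_comb p M t N) Q u - dual_mixed_density q j M Q u) / t"
    for t u
  define B where "B = \<bar>q\<bar> * (2 * K / \<bar>p\<bar>)"
  have near: "\<forall>\<^sub>F t in at 0. \<bar>t\<bar> \<le> t0 \<and> t \<noteq> 0"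
    using t0_pos by (auto simp: eventually_at dist_real_def intro!: exI[of _ t0])
  note density_cont = continuous_on_dual_mixed_density[OF Q]
    and density_Lp_comb_cont = continuous_on_dual_mixed_density_Lp_comb[OF Q]
  have "((\<lambda>t. \<integral>u. s t u \<partial>sphere_measure)
      \<longlongrightarrow> (\<integral>u. q / p * (dual_mixed_density q j M Q u * k (radial_gauss u)) \<partial>sphere_measure)) (at 0)"
  proof (rule integral_dominated_convergence_at)
    show "(\<lambda>u. q / p * (dual_mixed_density q j M Q u * k (radial_gauss u))) \<in> borel_measurable sphere_measure"
      using borel_measurable_sphere_measure_continuous[OF density_cont]
        measurable_compose[OF measurable_radial_gauss borel_measurable_continuous_on_restrict[OF k_cont]]
      by measurable
    show "integrable sphere_measure (\<lambda>u. B * exp (B * t0) * dual_mixed_density q j M Q u)"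
      by (intro integrable_mult_right integrable_sphere_measure_continuous density_cont)
    show "\<forall>\<^sub>F t in at 0. s t \<in> borel_measurable sphere_measure \<and>
        (AE u in sphere_measure. norm (s t u) \<le> B * exp (B * t0) * dual_mixed_density q j M Q u)"
      using near
    proof eventually_elim
      case (elim t)
      have "continuous_on S (s t)"
        unfolding s_def[abs_def] using elim
        by (intro continuous_intros density_Lp_comb_cont density_cont) simp_all
      then show ?case
        using dual_mixed_density_Lp_comb_quotient_bound elim
        by (auto simp: s_def B_def borel_measurable_sphere_measure_continuous space_sphere_measure)
    qed
    show "AE u in sphere_measure. ((\<lambda>t. s t u) \<longlongrightarrow> q / p * (dual_mixed_density q j M Q u * k (radial_gauss u)))
        (at 0)"
      using AE_smooth unfolding s_def by eventually_elim (rule dual_mixed_density_Lp_comb_quotient_tendsto)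
  qed
  moreover have "\<forall>\<^sub>F t in at 0. (\<integral>u. s t u \<partial>sphere_measure) =
      (dual_mixed_quermass q j (Lp_comb p M t N) Q - dual_mixed_quermass q j M Q) / t"
    using near
  proof eventually_elim
    case (elim t)
    then show ?case
      using integrable_sphere_measure_continuous[OF density_cont]
        integrable_sphere_measure_continuous[OF density_Lp_comb_cont]
      by (simp add: s_def dual_mixed_quermass_eq_integral)
  qed
  ultimately show ?thesis
    by (simp add: Lim_transform_eventually)
qed

end

theorem theorem4p4:
  fixes p q j :: real and M N Q :: "'a::euclidean_space set"
  assumes "p \<noteq> 0" and "q \<noteq> 0" and "j \<noteq> real DIM('a)"
    and "convex_body_o M" and "convex_body_o N" and "star_body_o Q"
  shows "((\<lambda>t. (dual_mixed_quermass q j (Lp_comb p M t N) Q - dual_mixed_quermass q j M Q) / t)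
           \<longlongrightarrow> (q / p) * (\<integral>v. support_fun N v powr p \<partial>(pq_dual_mixed_curv p q j M Q))) (at 0)"
proof -
  interpret Lp_perturbation M N p
    using assms(1,4,5) by unfold_locales
  show ?thesis
    using dual_mixed_quermass_Lp_comb_tendsto[OF assms(6)] integral_pq_dual_mixed_curv[OF assms(6)]
    by simp
qed

end
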